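(* Let $M$ be an $8$-manifold with an $\mathrm{SL}(4,\mathbb R)$-structure $(g,\omega_r,\Omega_+,\Omega_-)$ locally modelled as $$g=(e^0)^2-\sum_{i=1}^4(e^i)^2+\sum_{a=5}^7(e^a)^2,\quad \Omega_\pm=(e^4\pm e^0)\wedge(e^1\pm e^5)\wedge(e^2\pm e^6)\wedge(e^3\pm e^7),\quad \omega_r=e^{15}+e^{26}+e^{37}+e^{40}.$$ For $\theta\in(0,\pi/2)$ define $$\Phi_\theta=\cos(2\theta)\,\tfrac12(\Omega_++\Omega_-)+i\sin(2\theta)\,\tfrac12(\Omega_+-\Omega_-)+\tfrac12\,\omega_r\wedge\omega_r .$$ Then the $\mathrm{SL}(4,\mathbb R)$-structure is integrable if and only if $d\Phi_\theta=0$.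
   Context: Notation: $e^{ab}=e^a\wedge e^b$. The $\mathrm{SL}(4,\mathbb R)$-structure is called integrable (torsion-free) if the Levi-Civita connection of $g$ preserves $\omega_r$ and $\Omega_\pm$ (equivalently $d\omega_r=0$, $d\Omega_\pm=0$). $\Omega_+$ and $\Omega_-$ are of type $(4,0)$ and $(0,4)$ with respect to the para-complex bigrading determined by the orthogonal para-complex structure $K$ with $\omega_r(X,Y)=g(KX,Y)$. *)

theory Defs
  imports "HOL-Analysis.Analysis"
begin

text \<open>A (possibly inhomogeneous) differential form with coefficients in 'a is represented by
  its coefficient functions: alpha I x is the coefficient of dx_I at x, where for
  I = {i1 < ... < ik} we put dx_I = dx_i1 wedge ... wedge dx_ik.\<close>

type_synonym 'a dform = "8 set \<Rightarrow> real^8 \<Rightarrow> 'a"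

definition partial :: "8 \<Rightarrow> (real^8 \<Rightarrow> 'a::real_normed_vector) \<Rightarrow> real^8 \<Rightarrow> 'a" where
  "partial j f x = vector_derivative (\<lambda>t. f (x + t *\<^sub>R axis j 1)) (at 0)"

definition smooth8_on :: "(real^8) set \<Rightarrow> (real^8 \<Rightarrow> 'a::real_normed_vector) \<Rightarrow> bool" where
  "smooth8_on U f \<longleftrightarrow>
     (\<forall>js. continuous_on U (foldr partial js f)) \<and>
     (\<forall>js j. \<forall>x\<in>U. (\<lambda>t. foldr partial js f (x + t *\<^sub>R axis j 1)) differentiable (at 0))"

text \<open>Sign of the shuffle: dx_I wedge dx_J = (-1)^(inversions I J) dx_(I union J) for disjoint I, J.\<close>
definition inversions :: "8 set \<Rightarrow> 8 set \<Rightarrow> nat" where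
  "inversions I J = card {(i, j). i \<in> I \<and> j \<in> J \<and> j < i}"

definition fadd :: "'a::real_normed_field dform \<Rightarrow> 'a dform \<Rightarrow> 'a dform" where
  "fadd a b = (\<lambda>I x. a I x + b I x)"

definition fsub :: "'a::real_normed_field dform \<Rightarrow> 'a dform \<Rightarrow> 'a dform" where
  "fsub a b = (\<lambda>I x. a I x - b I x)"

definition fscale :: "'a::real_normed_field \<Rightarrow> 'a dform \<Rightarrow> 'a dform" where
  "fscale c a = (\<lambda>I x. c * a I x)"

definition wedge :: "'a::real_normed_field dform \<Rightarrow> 'a dform \<Rightarrow> 'a dform" where
  "wedge a b = (\<lambda>K x. \<Sum>I\<in>Pow K. (-1) ^ inversions I (K - I) * a I x * b (K - I) x)"

text \<open>Exterior derivative: d(f dx_I) = sum_j (partial_j f) dx_j wedge dx_I.\<close>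
definition ext_d :: "'a::real_normed_field dform \<Rightarrow> 'a dform" where
  "ext_d a = (\<lambda>K x. \<Sum>j\<in>K. (-1) ^ card {i\<in>K. i < j} * partial j (a (K - {j})) x)"

definition cform :: "real dform \<Rightarrow> complex dform" where
  "cform a = (\<lambda>I x. complex_of_real (a I x))"

definition dclosed_on :: "(real^8) set \<Rightarrow> 'a::real_normed_field dform \<Rightarrow> bool" where
  "dclosed_on U a \<longleftrightarrow> (\<forall>x\<in>U. \<forall>K. ext_d a K x = 0)"

definition coframe_on :: "(real^8) set \<Rightarrow> (nat \<Rightarrow> real dform) \<Rightarrow> bool" where
  "coframe_on U e \<longleftrightarrow>
     (\<forall>i<8. \<forall>I. card I \<noteq> 1 \<longrightarrow> (\<forall>x. e i I x = 0)) \<and>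
     (\<forall>i<8. \<forall>I. smooth8_on U (e i I)) \<and>
     (\<forall>x\<in>U. \<forall>c::nat \<Rightarrow> real. (\<forall>j. (\<Sum>i<8. c i * e i {j} x) = 0) \<longrightarrow> (\<forall>i<8. c i = 0))"

definition Omega_plus :: "(nat \<Rightarrow> real dform) \<Rightarrow> real dform" where
  "Omega_plus e = wedge (wedge (wedge (fadd (e 4) (e 0)) (fadd (e 1) (e 5))) (fadd (e 2) (e 6)))
                        (fadd (e 3) (e 7))"

definition Omega_minus :: "(nat \<Rightarrow> real dform) \<Rightarrow> real dform" where
  "Omega_minus e = wedge (wedge (wedge (fsub (e 4) (e 0)) (fsub (e 1) (e 5))) (fsub (e 2) (e 6)))
                        (fsub (e 3) (e 7))"

definition omega_r :: "(nat \<Rightarrow> real dform) \<Rightarrow> real dform" where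
  "omega_r e = fadd (fadd (wedge (e 1) (e 5)) (wedge (e 2) (e 6))) (fadd (wedge (e 3) (e 7)) (wedge (e 4) (e 0)))"

definition metric_g :: "(nat \<Rightarrow> real dform) \<Rightarrow> real^8 \<Rightarrow> real^8 \<Rightarrow> real^8 \<Rightarrow> real" where
  "metric_g e x v w = (let c = (\<lambda>i u. \<Sum>j\<in>UNIV. e i {j} x * u $ j) in
     c 0 v * c 0 w - (\<Sum>i\<in>{1..4}. c i v * c i w) + (\<Sum>a\<in>{5..7}. c a v * c a w))"

text \<open>Integrability (torsion-freeness), in the equivalent form given in the paper.\<close>
definition sl4_integrable :: "(real^8) set \<Rightarrow> (nat \<Rightarrow> real dform) \<Rightarrow> bool" where
  "sl4_integrable U e \<longleftrightarrow> dclosed_on U (omega_r e) \<and> dclosed_on U (Omega_plus e) \<and> dclosed_on U (Omega_minus e)"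

definition Phi :: "(nat \<Rightarrow> real dform) \<Rightarrow> real \<Rightarrow> complex dform" where
  "Phi e \<theta> = fadd (fadd
      (fscale (complex_of_real (cos (2 * \<theta>) / 2)) (cform (fadd (Omega_plus e) (Omega_minus e))))
      (fscale (\<i> * complex_of_real (sin (2 * \<theta>) / 2)) (cform (fsub (Omega_plus e) (Omega_minus e)))))
      (fscale (1/2) (cform (wedge (omega_r e) (omega_r e))))"

end

theory Submission
  imports Defs "HOL-Library.Function_Algebras"
begin

text \<open>Everything happens pointwise in the exterior algebra of \<open>(\<real>\<^sup>8)\<^sup>*\<close>.
  Since \<open>sin 2\<theta> \<noteq> 0\<close>, the imaginary part of \<open>d\<Phi>\<^sub>\<theta> = 0\<close> says \<open>d\<Omega>\<^sub>+ = d\<Omega>\<^sub>- =: \<gamma>\<close>.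
  By the Leibniz rule \<open>d(a\<^sub>0 \<wedge> a\<^sub>1 \<wedge> a\<^sub>2 \<wedge> a\<^sub>3)\<close> is a sum of four terms, the \<open>k\<close>-th one
  killed by every \<open>a\<^sub>i\<close> with \<open>i \<noteq> k\<close>; hence \<open>\<gamma>\<close> is killed by the wedge of any two of the
  factors of \<open>\<Omega>\<^sub>+\<close>, and likewise for \<open>\<Omega>\<^sub>-\<close>. These eight factors form a coframe, and among any
  three of them two belong to the same \<open>\<Omega>\<^sub>\<plusminus>\<close>, so the 5-form \<open>\<gamma>\<close> wedged with any three
  coframe elements vanishes, forcing \<open>\<gamma> = 0\<close>. The real part then reduces to
  \<open>\<omega>\<^sub>r \<wedge> d\<omega>\<^sub>r = 0\<close>, and wedging with the nondegenerate \<open>\<omega>\<^sub>r\<close> is injective on 3-forms in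
  dimension 8, so \<open>d\<omega>\<^sub>r = 0\<close>.\<close>

section \<open>The exterior algebra of \<open>(\<real>\<^sup>8)\<^sup>*\<close>\<close>

type_synonym eform = "8 set \<Rightarrow> real"

definition ewedge :: "eform \<Rightarrow> eform \<Rightarrow> eform" (infixr "\<wedge>" 70) where
  "a \<wedge> b = (\<lambda>K. \<Sum>I\<in>Pow K. (-1) ^ inversions I (K - I) * a I * b (K - I))"

definition escale :: "real \<Rightarrow> eform \<Rightarrow> eform" where
  "escale r a = (\<lambda>K. r * a K)"

definition grade_inv :: "eform \<Rightarrow> eform" where
  "grade_inv a = (\<lambda>I. (-1) ^ card I * a I)"

definition homog :: "nat \<Rightarrow> eform \<Rightarrow> bool" where
  "homog n a \<longleftrightarrow> (\<forall>I. card I \<noteq> n \<longrightarrow> a I = 0)"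

lemma inversions_Un_left:
  assumes "A \<inter> B = {}"
  shows "inversions (A \<union> B) C = inversions A C + inversions B C"
proof -
  have "{(i, j). i \<in> A \<union> B \<and> j \<in> C \<and> j < i}
      = {(i, j). i \<in> A \<and> j \<in> C \<and> j < i} \<union> {(i, j). i \<in> B \<and> j \<in> C \<and> j < i}"
    by auto
  moreover have "{(i, j). i \<in> A \<and> j \<in> C \<and> j < i} \<inter> {(i, j). i \<in> B \<and> j \<in> C \<and> j < i} = {}"
    using assms by auto
  ultimately show ?thesis
    unfolding inversions_def by (simp add: card_Un_disjoint)
qed

lemma inversions_Un_right:
  assumes "B \<inter> C = {}"
  shows "inversions A (B \<union> C) = inversions A B + inversions A C"
proof -
  have "{(i, j). i \<in> A \<and> j \<in> B \<union> C \<and> j < i}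
      = {(i, j). i \<in> A \<and> j \<in> B \<and> j < i} \<union> {(i, j). i \<in> A \<and> j \<in> C \<and> j < i}"
    by auto
  moreover have "{(i, j). i \<in> A \<and> j \<in> B \<and> j < i} \<inter> {(i, j). i \<in> A \<and> j \<in> C \<and> j < i} = {}"
    using assms by auto
  ultimately show ?thesis
    unfolding inversions_def by (simp add: card_Un_disjoint)
qed

lemma inversions_singleton_left: "inversions {j} R = card {r \<in> R. r < j}"
proof -
  have "{(i, r). i \<in> {j} \<and> r \<in> R \<and> r < i} = (\<lambda>r. (j, r)) ` {r \<in> R. r < j}"
    by auto
  then show ?thesis
    unfolding inversions_def by (simp add: card_image inj_on_def)
qed

lemma inversions_singleton_right: "inversions R {j} = card {r \<in> R. j < r}"
proof -
  have "{(i, r). i \<in> R \<and> r \<in> {j} \<and> r < i} = (\<lambda>r. (r, j)) ` {r \<in> R. j < r}"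
    by auto
  then show ?thesis
    unfolding inversions_def by (simp add: card_image inj_on_def)
qed

lemma inversions_insert_left:
  "j \<notin> I \<Longrightarrow> inversions (insert j I) R = inversions I R + card {r \<in> R. r < j}"
  using inversions_Un_left[of "{j}" I R] inversions_singleton_left[of j R] by simp

lemma inversions_insert_right:
  "j \<notin> R \<Longrightarrow> inversions I (insert j R) = inversions I R + card {i \<in> I. j < i}"
  using inversions_Un_right[of "{j}" R I] inversions_singleton_right[of I j] by simp

lemma card_split_at:
  assumes "j \<notin> R"
  shows "card R = card {r \<in> R. r < j} + card {r \<in> R. j < (r::8)}"
proof -
  have "R = {r \<in> R. r < j} \<union> {r \<in> R. j < r}"
    using assms by (auto simp: not_less le_less)
  then have "card R = card ({r \<in> R. r < j} \<union> {r \<in> R. j < r})"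
    by simp
  also have "\<dots> = card {r \<in> R. r < j} + card {r \<in> R. j < r}"
    by (rule card_Un_disjoint) auto
  finally show ?thesis .
qed

lemma card_subset_split: "I \<subseteq> (K::8 set) \<Longrightarrow> card K = card I + card (K - I)"
  using card_Int_Diff[of K I] by (simp add: Int_absorb1)

lemma ewedge_assoc: "(a \<wedge> b) \<wedge> c = a \<wedge> b \<wedge> c"
proof (rule ext)
  fix K :: "8 set"
  define F where "F A B = (-1::real) ^ (inversions A B + inversions A (K - A - B) + inversions B (K - A - B))
      * a A * b B * c (K - A - B)" for A B
  have "((a \<wedge> b) \<wedge> c) K = (\<Sum>I\<in>Pow K. \<Sum>A\<in>Pow I. (-1) ^ inversions I (K - I)
      * ((-1) ^ inversions A (I - A) * a A * b (I - A)) * c (K - I))"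
    unfolding ewedge_def by (simp add: sum_distrib_left sum_distrib_right)
  also have "\<dots> = (\<Sum>(I, A)\<in>Sigma (Pow K) Pow. (-1) ^ inversions I (K - I)
      * ((-1) ^ inversions A (I - A) * a A * b (I - A)) * c (K - I))"
    by (rule sum.Sigma) auto
  also have "\<dots> = (\<Sum>(A, B)\<in>Sigma (Pow K) (\<lambda>A. Pow (K - A)). F A B)"
  proof (rule sum.reindex_bij_witness[where i="\<lambda>(A, B). (A \<union> B, A)" and j="\<lambda>(I, A). (A, I - A)"],
      goal_cases)
    case (5 p)
    obtain I A where p: "p = (I, A)" by (cases p)
    have "I \<subseteq> K" "A \<subseteq> I" using 5 p by auto
    then have "K - A - (I - A) = K - I" "A \<union> (I - A) = I" by auto
    moreover have "inversions (A \<union> (I - A)) (K - I) = inversions A (K - I) + inversions (I - A) (K - I)"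
      by (rule inversions_Un_left) auto
    ultimately show ?case
      unfolding p F_def by (simp add: power_add algebra_simps)
  qed auto
  also have "\<dots> = (\<Sum>A\<in>Pow K. \<Sum>B\<in>Pow (K - A). F A B)"
    by (rule sum.Sigma[symmetric]) auto
  also have "\<dots> = (a \<wedge> b \<wedge> c) K"
  proof -
    have "inversions A (K - A) = inversions A B + inversions A (K - A - B)"
      if "B \<subseteq> K - A" for A B
    proof -
      from that have "K - A = B \<union> (K - A - B)" "B \<inter> (K - A - B) = {}" by auto
      then show ?thesis by (metis inversions_Un_right)
    qed
    then show ?thesis
      unfolding ewedge_def F_def
      by (intro sum.cong refl) (simp add: sum_distrib_left power_add algebra_simps)
  qed
  finally show "((a \<wedge> b) \<wedge> c) K = (a \<wedge> b \<wedge> c) K" .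
qed

lemma ewedge_add_left: "(a + b) \<wedge> c = a \<wedge> c + b \<wedge> c"
  unfolding ewedge_def by (auto simp: fun_eq_iff algebra_simps sum.distrib)

lemma ewedge_add_right: "a \<wedge> (b + c) = a \<wedge> b + a \<wedge> c"
  unfolding ewedge_def by (auto simp: fun_eq_iff algebra_simps sum.distrib)

lemma ewedge_uminus_left: "(- a) \<wedge> c = - (a \<wedge> c)"
  unfolding ewedge_def by (auto simp: fun_eq_iff algebra_simps sum_negf)

lemma ewedge_uminus_right: "a \<wedge> (- c) = - (a \<wedge> c)"
  unfolding ewedge_def by (auto simp: fun_eq_iff algebra_simps sum_negf)

lemma ewedge_zero_left [simp]: "0 \<wedge> c = 0"
  unfolding ewedge_def by (auto simp: fun_eq_iff)

lemma ewedge_zero_right [simp]: "a \<wedge> 0 = 0"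
  unfolding ewedge_def by (auto simp: fun_eq_iff)

lemma ewedge_escale_left: "escale r a \<wedge> c = escale r (a \<wedge> c)"
  unfolding ewedge_def escale_def by (auto simp: fun_eq_iff algebra_simps sum_distrib_left)

lemma ewedge_escale_right: "a \<wedge> escale r c = escale r (a \<wedge> c)"
  unfolding ewedge_def escale_def by (auto simp: fun_eq_iff algebra_simps sum_distrib_left)

lemma ewedge_sum_left: "finite S \<Longrightarrow> (\<Sum>i\<in>S. f i) \<wedge> c = (\<Sum>i\<in>S. f i \<wedge> c)"
proof (induction S rule: finite_induct)
  case (insert x F)
  then show ?case
    by (simp only: sum.insert[OF insert(1,2)] ewedge_add_left insert(3))
qed (simp only: sum.empty ewedge_zero_left ewedge_zero_right)

lemma ewedge_sum_right: "finite S \<Longrightarrow> c \<wedge> (\<Sum>i\<in>S. f i) = (\<Sum>i\<in>S. c \<wedge> f i)"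
proof (induction S rule: finite_induct)
  case (insert x F)
  then show ?case
    by (simp only: sum.insert[OF insert(1,2)] ewedge_add_right insert(3))
qed (simp only: sum.empty ewedge_zero_left ewedge_zero_right)

lemma escale_escale: "escale r (escale t a) = escale (r * t) a"
  by (auto simp: escale_def fun_eq_iff)

lemma escale_zero_right [simp]: "escale r 0 = 0"
  by (simp add: escale_def zero_fun_def)

lemma escale_uminus_right: "escale r (- a) = escale (- r) a"
  by (auto simp: escale_def fun_eq_iff)

lemma uminus_escale: "- escale r a = escale (- r) a"
  by (auto simp: escale_def fun_eq_iff)

lemma escale_add_left: "escale (r + t) a = escale r a + escale t a"
  by (auto simp: escale_def fun_eq_iff algebra_simps)

lemma sum_Pow_singletons:
  assumes "\<And>I. I \<subseteq> K \<Longrightarrow> card I \<noteq> 1 \<Longrightarrow> f I = (0::real)"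
  shows "(\<Sum>I\<in>Pow (K::8 set). f I) = (\<Sum>j\<in>K. f {j})"
proof -
  have "(\<Sum>I\<in>Pow K. f I) = (\<Sum>I\<in>(\<lambda>j. {j}) ` K. f I)"
    by (rule sum.mono_neutral_right)
      (auto, metis assms card_1_singletonE image_eqI insert_subset)
  also have "\<dots> = (\<Sum>j\<in>K. f {j})"
    by (rule sum.reindex_cong[where l="\<lambda>j. {j}"]) (auto simp: inj_on_def)
  finally show ?thesis .
qed

lemma ewedge_homog1_left:
  assumes "homog 1 u"
  shows "(u \<wedge> Y) K = (\<Sum>j\<in>K. (-1) ^ card {r \<in> K - {j}. r < j} * u {j} * Y (K - {j}))"
  unfolding ewedge_def
  by (subst sum_Pow_singletons) (use assms in \<open>auto simp: homog_def inversions_singleton_left\<close>)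

lemma ewedge_homog1_right:
  assumes "homog 1 u"
  shows "(Y \<wedge> u) K = (\<Sum>j\<in>K. (-1) ^ card {r \<in> K - {j}. j < r} * Y (K - {j}) * u {j})"
proof -
  have "(Y \<wedge> u) K = (\<Sum>I\<in>Pow K. (-1) ^ inversions (K - (K - I)) (K - I) * Y (K - (K - I)) * u (K - I))"
    unfolding ewedge_def by (intro sum.cong) (auto simp: Diff_Diff_Int Int_absorb1)
  also have "\<dots> = (\<Sum>I\<in>Pow K. (-1) ^ inversions (K - I) I * Y (K - I) * u I)"
    by (rule sum.reindex_bij_witness[where i="\<lambda>I. K - I" and j="\<lambda>I. K - I"])
      (auto simp: Diff_Diff_Int Int_absorb1)
  also have "\<dots> = (\<Sum>j\<in>K. (-1) ^ card {r \<in> K - {j}. j < r} * Y (K - {j}) * u {j})"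
    by (subst sum_Pow_singletons) (use assms in \<open>auto simp: homog_def inversions_singleton_right\<close>)
  finally show ?thesis .
qed

lemma ewedge_homog1_commute:
  assumes "homog 1 u"
  shows "u \<wedge> Y = grade_inv Y \<wedge> u"
proof (rule ext)
  fix K :: "8 set"
  show "(u \<wedge> Y) K = (grade_inv Y \<wedge> u) K"
    unfolding ewedge_homog1_left[OF assms] ewedge_homog1_right[OF assms]
  proof (intro sum.cong refl)
    fix j assume "j \<in> K"
    have "card (K - {j}) = card {r \<in> K - {j}. r < j} + card {r \<in> K - {j}. j < r}"
      by (rule card_split_at) auto
    then show "(-1) ^ card {r \<in> K - {j}. r < j} * u {j} * Y (K - {j})
        = (-1) ^ card {r \<in> K - {j}. j < r} * grade_inv Y (K - {j}) * u {j}"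
      unfolding grade_inv_def by (simp add: power_add algebra_simps)
  qed
qed

lemma grade_inv_grade_inv [simp]: "grade_inv (grade_inv a) = a"
  by (auto simp: grade_inv_def fun_eq_iff power_mult_distrib[symmetric])

lemma grade_inv_ewedge: "grade_inv (a \<wedge> b) = grade_inv a \<wedge> grade_inv b"
  unfolding grade_inv_def ewedge_def
  by (auto simp: fun_eq_iff sum_distrib_left intro!: sum.cong)
    (auto simp: card_subset_split power_add algebra_simps)

lemma sum_fun_apply: "(\<Sum>i\<in>S. f i) x = (\<Sum>i\<in>S. f i x :: 'b::comm_monoid_add)"
  by (induction S rule: infinite_finite_induct) auto

lemma grade_inv_sum: "grade_inv (\<Sum>i\<in>S. f i) = (\<Sum>i\<in>S. grade_inv (f i))"
  by (auto simp: grade_inv_def fun_eq_iff sum_fun_apply sum_distrib_left)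

lemma grade_inv_homog1:
  assumes "homog 1 u"
  shows "grade_inv u = - u"
proof (rule ext)
  fix I
  show "grade_inv u I = (- u) I"
    by (cases "card I = 1") (use assms in \<open>auto simp: grade_inv_def homog_def\<close>)
qed

lemma ewedge_homog1_self: "homog 1 u \<Longrightarrow> u \<wedge> u = 0"
  using ewedge_homog1_commute[of u u] by (auto simp: grade_inv_homog1 ewedge_uminus_left fun_eq_iff)

lemma ewedge_homog1_anticommute:
  assumes "homog 1 u" "homog 1 v"
  shows "u \<wedge> v \<wedge> X = - (v \<wedge> u \<wedge> X)"
proof -
  have "u \<wedge> v = - (v \<wedge> u)"
    using ewedge_homog1_commute[OF assms(1), of v] grade_inv_homog1[OF assms(2)]
    by (simp add: ewedge_uminus_left)
  then show ?thesis
    by (simp add: ewedge_assoc[symmetric] ewedge_uminus_left)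
qed

lemma ewedge_homog2_commute:
  assumes "homog 1 a" "homog 1 b"
  shows "(a \<wedge> b) \<wedge> X = X \<wedge> a \<wedge> b"
  using ewedge_homog1_commute[OF assms(1)] ewedge_homog1_commute[OF assms(2)]
  by (metis ewedge_assoc grade_inv_grade_inv)

lemma grade_inv_homog2: "homog 1 u \<Longrightarrow> homog 1 v \<Longrightarrow> grade_inv (u \<wedge> v) = u \<wedge> v"
  by (simp add: grade_inv_ewedge grade_inv_homog1 ewedge_uminus_left ewedge_uminus_right)

definition annihilates :: "eform \<Rightarrow> eform \<Rightarrow> bool" where
  "annihilates u Z \<longleftrightarrow> u \<wedge> Z = 0"

lemma annihilates_self: "homog 1 u \<Longrightarrow> annihilates u u"
  by (simp add: annihilates_def ewedge_homog1_self)

lemma annihilates_ewedge_left: "annihilates u Z \<Longrightarrow> annihilates u (Z \<wedge> Y)"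
  by (simp add: annihilates_def ewedge_assoc[symmetric])

lemma annihilates_ewedge_right: "homog 1 u \<Longrightarrow> annihilates u Z \<Longrightarrow> annihilates u (Y \<wedge> Z)"
  unfolding annihilates_def
  by (simp add: ewedge_assoc[symmetric] ewedge_homog1_commute[of u Y]) (simp add: ewedge_assoc)

lemma annihilates_grade_inv:
  assumes "homog 1 u" "annihilates u a"
  shows "annihilates u (grade_inv a)"
proof -
  have "grade_inv (u \<wedge> a) = - (u \<wedge> grade_inv a)"
    by (simp add: grade_inv_ewedge grade_inv_homog1[OF assms(1)] ewedge_uminus_left)
  with assms(2) show ?thesis
    by (auto simp: annihilates_def grade_inv_def fun_eq_iff)
qed

section \<open>Forms annihilated by all products from a spanning family\<close>

lemma foldr_ewedge_add: "foldr (\<wedge>) us (X + Y) = foldr (\<wedge>) us X + foldr (\<wedge>) us Y"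
  by (induction us) (simp_all only: foldr.simps o_apply id_apply ewedge_add_right)

lemma foldr_ewedge_escale: "foldr (\<wedge>) us (escale r X) = escale r (foldr (\<wedge>) us X)"
  by (induction us) (simp_all add: ewedge_escale_right)

lemma foldr_ewedge_zero [simp]: "foldr (\<wedge>) us 0 = 0"
  by (induction us) (simp_all only: foldr_Nil foldr_Cons o_apply id_apply ewedge_zero_right)

lemma foldr_ewedge_sum:
  "finite S \<Longrightarrow> foldr (\<wedge>) us (\<Sum>i\<in>S. f i) = (\<Sum>i\<in>S. foldr (\<wedge>) us (f i))"
proof (induction S rule: finite_induct)
  case (insert x F)
  then show ?case
    by (simp only: sum.insert[OF insert(1,2)] foldr_ewedge_add insert(3))
qed (simp only: sum.empty foldr_ewedge_zero)

lemma ewedge_foldr_commute: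
  assumes "homog 1 u" "\<forall>v\<in>set us. homog 1 v"
  shows "u \<wedge> foldr (\<wedge>) us X = escale ((-1) ^ length us) (foldr (\<wedge>) us (u \<wedge> X))"
  using assms(2)
proof (induction us)
  case (Cons v us)
  then have "homog 1 v" by simp
  then have "u \<wedge> foldr (\<wedge>) (v # us) X = - (v \<wedge> u \<wedge> foldr (\<wedge>) us X)"
    using ewedge_homog1_anticommute[OF assms(1)] by simp
  also have "\<dots> = escale ((-1) ^ length (v # us)) (foldr (\<wedge>) (v # us) (u \<wedge> X))"
    using Cons by (simp add: ewedge_escale_right uminus_escale)
  finally show ?case .
qed (simp add: escale_def)

lemma foldr_ewedge_eq_0_if_spanned:
  fixes f :: "'a \<Rightarrow> eform" and g :: "nat \<Rightarrow> eform"
  assumes f1: "\<And>j. j \<in> A \<Longrightarrow> homog 1 (f j)" and g1: "\<And>i. i < N \<Longrightarrow> homog 1 (g i)"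
    and span: "\<And>j. j \<in> A \<Longrightarrow> \<exists>b. f j = (\<Sum>i<N. escale (b i) (g i))"
    and g0: "\<And>is. length is = length js \<Longrightarrow> set is \<subseteq> {..<N} \<Longrightarrow> foldr (\<wedge>) (map g is) X = 0"
    and js: "set js \<subseteq> A"
  shows "foldr (\<wedge>) (map f js) X = 0"
  using g0 js
proof (induction js arbitrary: X)
  case Nil
  then show ?case using Nil.prems(1)[of "[]"] by simp
next
  case (Cons j js)
  have j: "j \<in> A" and "set js \<subseteq> A" using Cons.prems(2) by auto
  have sign: "escale ((-1) ^ n) (escale ((-1) ^ n) Y) = Y" for n Y
    by (simp add: escale_escale power_mult_distrib[symmetric] escale_def)
  have g_commute: "g i \<wedge> foldr (\<wedge>) (map g is) X
      = escale ((-1) ^ length is) (foldr (\<wedge>) (map g is) (g i \<wedge> X))"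
    if "i < N" "set is \<subseteq> {..<N}" for i "is"
    using ewedge_foldr_commute[of "g i" "map g is" X] g1 that by auto
  have inner: "foldr (\<wedge>) (map f js) (g i \<wedge> X) = 0" if i: "i < N" for i
  proof (rule Cons.IH)
    fix "is" assume "length is = length js" "set is \<subseteq> {..<N}"
    then have "g i \<wedge> foldr (\<wedge>) (map g is) X = 0"
      using Cons.prems(1)[of "i # is"] i by (simp add: zero_fun_def)
    then show "foldr (\<wedge>) (map g is) (g i \<wedge> X) = 0"
      using g_commute[OF i \<open>set is \<subseteq> {..<N}\<close>] sign by (metis escale_zero_right)
  qed fact
  obtain b where b: "f j = (\<Sum>i<N. escale (b i) (g i))" using span[OF j] by blast
  have "foldr (\<wedge>) (map f (j # js)) X
      = escale ((-1) ^ length js) (foldr (\<wedge>) (map f js) (f j \<wedge> X))"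
    using ewedge_foldr_commute[OF f1[OF j], of "map f js"] Cons.prems(2) f1 by auto
  also have "foldr (\<wedge>) (map f js) (f j \<wedge> X)
      = (\<Sum>i<N. escale (b i) (foldr (\<wedge>) (map f js) (g i \<wedge> X)))"
    unfolding b
    by (simp only: ewedge_sum_left ewedge_escale_left foldr_ewedge_sum foldr_ewedge_escale finite_lessThan)
  also have "\<dots> = 0"
    by (simp add: inner)
  finally show ?case by (simp only: escale_zero_right)
qed

definition dx :: "8 \<Rightarrow> eform" where
  "dx j = (\<lambda>I. if I = {j} then 1 else 0)"

lemma homog1_dx: "homog 1 (dx j)"
  by (auto simp: homog_def dx_def)

lemma ewedge_dx_apply:
  "(dx j \<wedge> Y) L = (if j \<in> L then (-1) ^ card {r \<in> L - {j}. r < j} * Y (L - {j}) else 0)"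
proof -
  have "(dx j \<wedge> Y) L = (\<Sum>j'\<in>L. (-1) ^ card {r \<in> L - {j'}. r < j'} * dx j {j'} * Y (L - {j'}))"
    by (rule ewedge_homog1_left[OF homog1_dx])
  also have "\<dots> = (\<Sum>j'\<in>L. if j' = j then (-1) ^ card {r \<in> L - {j}. r < j} * Y (L - {j}) else 0)"
    by (intro sum.cong) (auto simp: dx_def)
  finally show ?thesis by simp
qed

lemma foldr_ewedge_dx_apply:
  "distinct js \<Longrightarrow> set js \<subseteq> L \<Longrightarrow>
    \<exists>s. s \<noteq> 0 \<and> foldr (\<wedge>) (map dx js) Y L = s * Y (L - set js)"
proof (induction js arbitrary: L)
  case (Cons j js)
  then have "distinct js" "set js \<subseteq> L - {j}" "j \<in> L" by auto
  then obtain s where "s \<noteq> 0" "foldr (\<wedge>) (map dx js) Y (L - {j}) = s * Y (L - {j} - set js)"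
    using Cons.IH by blast
  moreover have "L - {j} - set js = L - set (j # js)" by auto
  ultimately show ?case using \<open>j \<in> L\<close>
    by (intro exI[of _ "(-1) ^ card {r \<in> L - {j}. r < j} * s"]) (simp add: ewedge_dx_apply)
qed (intro exI[of _ 1], simp)

text \<open>Wedging with the complementary coordinates isolates a single coefficient.\<close>

lemma homog_eq_0_if_foldr_ewedge_dx_eq_0:
  assumes "homog n Y" and "\<And>js. length js = 8 - n \<Longrightarrow> foldr (\<wedge>) (map dx js) Y = 0"
  shows "Y = 0"
proof (rule ext)
  fix K :: "8 set"
  show "Y K = 0 K"
  proof (cases "card K = n")
    case False
    then show ?thesis using assms(1) by (simp add: homog_def)
  next
    case True
    define js where "js = sorted_list_of_set (UNIV - K)"
    have js: "distinct js" "set js = UNIV - K" unfolding js_def by auto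
    then have "length js = 8 - n"
      using True distinct_card by (fastforce simp: card_Diff_subset)
    moreover obtain s where "s \<noteq> 0" "foldr (\<wedge>) (map dx js) Y UNIV = s * Y (UNIV - set js)"
      using foldr_ewedge_dx_apply[OF js(1), of UNIV Y] by auto
    moreover have "UNIV - set js = K" using js by auto
    ultimately show ?thesis using assms(2) by simp
  qed
qed

lemma homog_eq_0_if_foldr_ewedge_eq_0:
  fixes E :: "nat \<Rightarrow> eform"
  assumes E: "\<And>i. i < N \<Longrightarrow> homog 1 (E i)"
    and span: "\<And>j. \<exists>b. dx j = (\<Sum>i<N. escale (b i) (E i))"
    and "homog n Y"
    and E0: "\<And>is. length is = 8 - n \<Longrightarrow> set is \<subseteq> {..<N} \<Longrightarrow> foldr (\<wedge>) (map E is) Y = 0"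
  shows "Y = 0"
proof (rule homog_eq_0_if_foldr_ewedge_dx_eq_0[OF \<open>homog n Y\<close>])
  fix js :: "8 list" assume "length js = 8 - n"
  show "foldr (\<wedge>) (map dx js) Y = 0"
    by (rule foldr_ewedge_eq_0_if_spanned[of UNIV dx N E, OF homog1_dx E span E0])
      (use \<open>length js = 8 - n\<close> in auto)
qed

lemma independent_rows_span_unit:
  fixes M :: "nat \<Rightarrow> 8 \<Rightarrow> real"
  assumes indep: "\<forall>c::nat \<Rightarrow> real. (\<forall>j. (\<Sum>i<8. c i * M i j) = 0) \<longrightarrow> (\<forall>i<8. c i = 0)"
  shows "\<exists>b. \<forall>j'. (\<Sum>i<8. b i * M i j') = (if j' = j then 1 else 0)"
proof -
  obtain idx :: "8 \<Rightarrow> nat" where idx: "bij_betw idx UNIV {..<8}"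
    using finite_same_card_bij[of "UNIV :: 8 set" "{..<8::nat}"] by auto
  define F :: "real^8 \<Rightarrow> real^8" where "F v = (\<chi> j'. \<Sum>i\<in>UNIV. v $ i * M (idx i) j')" for v
  define coeff :: "real^8 \<Rightarrow> nat \<Rightarrow> real"
    where "coeff v n = (if n < 8 then v $ (inv_into UNIV idx n) else 0)" for v n
  have reindex: "(\<Sum>n<8. coeff v n * M n j') = F v $ j'" for v j'
  proof -
    have "(\<Sum>n<8. coeff v n * M n j') = (\<Sum>i\<in>UNIV. coeff v (idx i) * M (idx i) j')"
      using sum.reindex_bij_betw[OF idx, of "\<lambda>n. coeff v n * M n j'"] by simp
    also have "\<dots> = F v $ j'"
      using idx by (auto simp: F_def coeff_def bij_betw_def inv_into_f_f intro!: sum.cong)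
    finally show ?thesis .
  qed
  have lin: "linear F"
    unfolding F_def by (intro linearI) (auto simp: vec_eq_iff algebra_simps sum.distrib sum_distrib_left)
  have "inj F"
  proof (rule linear_injective_0[OF lin, THEN iffD2], intro allI impI)
    fix v assume "F v = 0"
    then have "\<forall>n<8. coeff v n = 0"
      using indep reindex by (simp add: vec_eq_iff)
    then have "v $ i = 0" for i
      using idx by (metis bij_betw_apply coeff_def inv_into_f_f bij_betw_imp_inj_on iso_tuple_UNIV_I lessThan_iff)
    then show "v = 0" by (simp add: vec_eq_iff)
  qed
  then obtain v where v: "F v = axis j 1"
    using linear_injective_imp_surjective[OF lin] by (metis surjE)
  show ?thesis
    by (intro exI[of _ "coeff v"] allI) (simp add: reindex v axis_def)
qed

lemma dx_in_span:
  fixes E :: "nat \<Rightarrow> eform"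
  assumes E1: "\<And>n. n < 8 \<Longrightarrow> homog 1 (E n)"
    and indep: "\<forall>c::nat \<Rightarrow> real. (\<forall>j. (\<Sum>i<8. c i * E i {j}) = 0) \<longrightarrow> (\<forall>i<8. c i = 0)"
  shows "\<exists>b. dx j = (\<Sum>i<8. escale (b i) (E i))"
proof -
  obtain b where b: "\<forall>j'. (\<Sum>i<8. b i * E i {j'}) = (if j' = j then 1 else 0)"
    using independent_rows_span_unit[OF indep] by blast
  have "dx j I = (\<Sum>i<8. escale (b i) (E i)) I" for I
  proof (cases "card I = 1")
    case True
    then obtain j' where "I = {j'}" by (auto simp: card_1_singleton_iff)
    then show ?thesis using b by (simp add: escale_def dx_def sum_fun_apply)
  next
    case False
    then have "E i I = 0" if "i < 8" for i using E1[OF that] by (simp add: homog_def)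
    then show ?thesis using False by (auto simp: escale_def dx_def sum_fun_apply)
  qed
  then show ?thesis by blast
qed

section \<open>Forms split along four 1-forms\<close>

text \<open>The exterior derivative of \<open>P 0 \<wedge> P 1 \<wedge> P 2 \<wedge> P 3\<close> has this shape by the Leibniz rule.\<close>

definition split_along :: "(nat \<Rightarrow> eform) \<Rightarrow> eform \<Rightarrow> bool" where
  "split_along P \<gamma> \<longleftrightarrow>
     (\<exists>T. \<gamma> = (\<Sum>k<4. T k) \<and> (\<forall>k<4. \<forall>i<4. i \<noteq> k \<longrightarrow> annihilates (P i) (T k)))"

lemma split_along_cong: "(\<And>i. i < 4 \<Longrightarrow> P i = Q i) \<Longrightarrow> split_along P \<gamma> \<longleftrightarrow> split_along Q \<gamma>"
  by (simp add: split_along_def)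

lemma split_along_ewedge_pair:
  assumes "split_along P \<gamma>" and P: "\<And>i. i < 4 \<Longrightarrow> homog 1 (P i)" and "x < 4" "y < 4"
  shows "P x \<wedge> P y \<wedge> \<gamma> = 0"
proof -
  obtain T where T: "\<gamma> = (\<Sum>k<4. T k)" "\<And>k i. k < 4 \<Longrightarrow> i < 4 \<Longrightarrow> i \<noteq> k \<Longrightarrow> P i \<wedge> T k = 0"
    using assms(1) unfolding split_along_def annihilates_def by blast
  have "P x \<wedge> P y \<wedge> T k = 0" if "k < 4" for k
  proof (cases "x = y")
    case True
    then show ?thesis
      using ewedge_homog1_self[OF P[OF \<open>x < 4\<close>]] by (simp add: ewedge_assoc[symmetric])
  next
    case False
    then consider "y \<noteq> k" | "x \<noteq> k" by blast
    then show ?thesis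
    proof cases
      case 1
      then show ?thesis using T(2) that \<open>y < 4\<close> by simp
    next
      case 2
      then show ?thesis
        using T(2) that \<open>x < 4\<close> ewedge_homog1_anticommute[OF P P, OF \<open>x < 4\<close> \<open>y < 4\<close>, of "T k"]
        by simp
    qed
  qed
  then show ?thesis
    unfolding T(1) by (simp add: ewedge_sum_right)
qed

text \<open>Of three indices two lie in the same half \<open>{0..3}\<close> or \<open>{4..7}\<close>.\<close>

lemma ewedge3_eq_0_if_split_along_halves:
  assumes G: "\<And>i. i < 8 \<Longrightarrow> homog 1 (G i)"
    and lo: "split_along G \<gamma>" and hi: "split_along (\<lambda>i. G (i + 4)) \<gamma>"
    and abc: "a < 8" "b < 8" "c < 8"
  shows "G a \<wedge> G b \<wedge> G c \<wedge> \<gamma> = 0"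
proof -
  have pair: "G x \<wedge> G y \<wedge> \<gamma> = 0" if "x < 8" "y < 8" "(x < 4) = (y < 4)" for x y
  proof (cases "x < 4")
    case True
    then show ?thesis using split_along_ewedge_pair[OF lo] G that by auto
  next
    case False
    then have "G x \<wedge> G y \<wedge> \<gamma> = G (x - 4 + 4) \<wedge> G (y - 4 + 4) \<wedge> \<gamma>"
      using that by simp
    also have "\<dots> = 0"
      by (rule split_along_ewedge_pair[OF hi, of "x - 4" "y - 4"]) (use G False that in auto)
    finally show ?thesis .
  qed
  have pair_past: "G x \<wedge> G y \<wedge> Z \<wedge> \<gamma> = 0" if "x < 8" "y < 8" "(x < 4) = (y < 4)" for x y Z
  proof -
    have "G x \<wedge> G y \<wedge> Z \<wedge> \<gamma> = ((G x \<wedge> G y) \<wedge> Z) \<wedge> \<gamma>"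
      by (simp add: ewedge_assoc)
    also have "\<dots> = (Z \<wedge> G x \<wedge> G y) \<wedge> \<gamma>"
      using ewedge_homog2_commute[OF G G, OF that(1,2)] by simp
    also have "\<dots> = Z \<wedge> G x \<wedge> G y \<wedge> \<gamma>"
      by (simp add: ewedge_assoc)
    finally show ?thesis using pair[OF that] by simp
  qed
  consider "(a < 4) = (b < 4)" | "(a < 4) = (c < 4)" | "(b < 4) = (c < 4)" by auto
  then show ?thesis
  proof cases
    case 1
    then show ?thesis using pair_past abc by simp
  next
    case 2
    then show ?thesis
      using pair_past[of a c "G b"] ewedge_homog1_anticommute[OF G G, OF abc(2,3)] abc
      by (simp add: ewedge_uminus_right)
  next
    case 3
    then show ?thesis using pair abc by simp
  qed
qed

section \<open>Wedging with \<open>\<omega>\<^sub>r\<close> is injective on 3-forms\<close>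

lemma sum_lessThan_4_eq:
  fixes i j l m :: nat
  assumes "i < 4" "j < 4" "l < 4" "m < 4" "i \<noteq> j" "i \<noteq> l" "i \<noteq> m" "j \<noteq> l" "j \<noteq> m" "l \<noteq> m"
  shows "(\<Sum>t<4. f t) = f i + f j + f l + (f m :: 'a::comm_monoid_add)"
proof -
  have "{i, j, l, m} \<subseteq> {..<4}" "card {i, j, l, m} = 4" using assms by auto
  then have "{..<4::nat} = {i, j, l, m}" by (metis card_lessThan card_subset_eq finite_lessThan)
  then show ?thesis using assms by (simp add: add.assoc)
qed

lemma sum_lessThan_4: "(\<Sum>k<(4::nat). f k) = f 0 + f 1 + f 2 + (f 3 :: 'a::comm_monoid_add)"
  by (simp add: eval_nat_numeral add.assoc)

lemma obtain_fourth_index: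
  fixes i j l :: nat
  obtains m where "m < 4" "m \<noteq> i" "m \<noteq> j" "m \<noteq> l"
proof -
  have "card {i, j, l} \<le> 3"
    using card_length[of "[i, j, l]"] by simp
  moreover have "card {..<4::nat} \<le> card {i, j, l}" if "{..<4} \<subseteq> {i, j, l}"
    using that by (intro card_mono) auto
  ultimately obtain m where "m < 4" "m \<notin> {i, j, l}" by fastforce
  then show ?thesis using that by simp
qed

lemma not_distinct_remove1: "\<not> distinct L \<Longrightarrow> \<exists>x. x \<in> set (remove1 x L)"
proof (induction L)
  case (Cons y L)
  show ?case
  proof (cases "y \<in> set L")
    case True
    then show ?thesis by (intro exI[of _ y]) simp
  next
    case False
    with Cons obtain x where "x \<in> set (remove1 x L)" by auto
    moreover have "x \<noteq> y" using False calculation by (meson notin_set_remove1)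
    ultimately show ?thesis by (intro exI[of _ x]) simp
  qed
qed simp

text \<open>\<open>\<omega>\<^sub>r = e\<^sup>1\<^sup>5 + e\<^sup>2\<^sup>6 + e\<^sup>3\<^sup>7 + e\<^sup>4\<^sup>0\<close> is the sum over \<open>k < 4\<close> of the planes spanned by
  \<open>e\<^bsub>plane_fst k\<^esub>\<close> and \<open>e\<^bsub>plane_snd k\<^esub>\<close>; \<open>plane_of n\<close> is the plane containing \<open>e\<^sup>n\<close>.\<close>

definition plane_fst :: "nat \<Rightarrow> nat" where "plane_fst k = k + 1"
definition plane_snd :: "nat \<Rightarrow> nat" where "plane_snd k = (k + 5) mod 8"
definition plane_of :: "nat \<Rightarrow> nat" where "plane_of n = ((n + 7) mod 8) mod 4"

lemma plane_of_less: "plane_of n < 4"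
  by (simp add: plane_of_def)

lemma plane_fst_less: "k < 4 \<Longrightarrow> plane_fst k < 8"
  by (simp add: plane_fst_def)

lemma plane_snd_less: "plane_snd k < 8"
  by (simp add: plane_snd_def)

lemma plane_of_plane_snd: "k < 4 \<Longrightarrow> plane_of (plane_snd k) = k"
proof -
  assume "k < 4"
  then consider "k = 0" | "k = 1" | "k = 2" | "k = 3" by linarith
  then show ?thesis by cases (simp_all add: plane_of_def plane_snd_def)
qed

lemma plane_of_cases: "n < 8 \<Longrightarrow> n = plane_fst (plane_of n) \<or> n = plane_snd (plane_of n)"
proof -
  assume "n < 8"
  then consider "n = 0" | "n = 1" | "n = 2" | "n = 3" | "n = 4" | "n = 5" | "n = 6" | "n = 7"
    by linarith
  then show ?thesis by cases (simp_all add: plane_of_def plane_fst_def plane_snd_def)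
qed

text \<open>A form killed by \<open>\<omega>\<^sub>r\<close> is killed by all 5-fold products of the coframe; for a 3-form
  this forces it to vanish.\<close>

locale lefschetz_kernel =
  fixes E :: "nat \<Rightarrow> eform" and \<beta> :: eform
  assumes homog1_E: "\<And>n. n < 8 \<Longrightarrow> homog 1 (E n)"
    and omega_ewedge_eq_0: "(\<Sum>k<4. E (plane_fst k) \<wedge> E (plane_snd k)) \<wedge> \<beta> = 0"
begin

definition plane :: "nat \<Rightarrow> eform" where
  "plane k = E (plane_fst k) \<wedge> E (plane_snd k)"

lemma plane_commute:
  assumes "k < 4"
  shows "plane k \<wedge> X = X \<wedge> plane k"
  unfolding plane_def by (intro ewedge_homog2_commute homog1_E plane_fst_less plane_snd_less assms)

lemma plane_ewedge_swap: "k < 4 \<Longrightarrow> plane k \<wedge> Z \<wedge> Y = Z \<wedge> plane k \<wedge> Y"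
  by (metis plane_commute ewedge_assoc)

lemma annihilates_plane_of:
  assumes "n < 8"
  shows "annihilates (E n) (plane (plane_of n))"
  using plane_of_cases[OF assms]
proof
  assume "n = plane_fst (plane_of n)"
  then show ?thesis
    unfolding plane_def by (metis annihilates_ewedge_left annihilates_self homog1_E assms)
next
  assume "n = plane_snd (plane_of n)"
  then show ?thesis
    unfolding plane_def by (metis annihilates_ewedge_right annihilates_self homog1_E assms)
qed

lemma plane_of_ewedge_eq_0: "n < 8 \<Longrightarrow> plane (plane_of n) \<wedge> E n \<wedge> Y = 0"
  using annihilates_plane_of[of n] plane_commute[OF plane_of_less]
  by (simp add: annihilates_def ewedge_assoc[symmetric])

lemma plane_plane_eq_0:
  assumes "k < 4"
  shows "plane k \<wedge> plane k \<wedge> Y = 0"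
proof -
  have "E (plane_snd k) \<wedge> plane k = 0"
    using annihilates_plane_of[OF plane_snd_less, of k] plane_of_plane_snd[OF assms]
    by (simp add: annihilates_def)
  then have "plane k \<wedge> plane k = 0"
    by (simp add: plane_def ewedge_assoc)
  then show ?thesis
    by (simp add: ewedge_assoc[symmetric])
qed

lemma ewedge_same_plane:
  assumes "a < 8" "b < 8" "a \<noteq> b" "plane_of a = plane_of b"
  shows "E a \<wedge> E b \<wedge> Y = plane (plane_of a) \<wedge> Y \<or> E a \<wedge> E b \<wedge> Y = - (plane (plane_of a) \<wedge> Y)"
  using plane_of_cases[OF assms(1)] plane_of_cases[OF assms(2)] assms(3,4)
    ewedge_homog1_anticommute[OF homog1_E homog1_E, OF assms(1,2), of Y]
  by (auto simp: plane_def ewedge_assoc)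

lemma sum_plane_ewedge_eq_0:
  assumes "x < 4" "s < 8"
  shows "(\<Sum>t<4. plane x \<wedge> plane t \<wedge> E s \<wedge> \<beta>) = 0"
proof -
  have "(\<Sum>t<4. plane t \<wedge> \<beta>) = 0"
    using omega_ewedge_eq_0 by (simp add: plane_def ewedge_sum_left)
  then have "plane x \<wedge> E s \<wedge> (\<Sum>t<4. plane t \<wedge> \<beta>) = 0" by simp
  then show ?thesis
    by (simp add: ewedge_sum_right plane_ewedge_swap)
qed

lemma plane_plane_ewedge_eq_0:
  assumes i: "i < 4" and j: "j < 4" and s: "s < 8"
    and distinct: "i \<noteq> j" "i \<noteq> plane_of s" "j \<noteq> plane_of s"
  shows "plane i \<wedge> plane j \<wedge> E s \<wedge> \<beta> = 0"
proof -
  define l where "l = plane_of s"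
  define F where "F x y = plane x \<wedge> plane y \<wedge> E s \<wedge> \<beta>" for x y
  have l: "l < 4" unfolding l_def by (rule plane_of_less)
  obtain m where m: "m < 4" "m \<noteq> i" "m \<noteq> j" "m \<noteq> l"
    using obtain_fourth_index by blast
  have F_sym: "F x y = F y x" if "x < 4" "y < 4" for x y
    unfolding F_def by (rule plane_ewedge_swap[OF that(1)])
  have diag: "F x x = 0" if "x < 4" for x
    unfolding F_def using plane_plane_eq_0[OF that] .
  have col: "F x l = 0" for x
    unfolding F_def l_def using plane_of_ewedge_eq_0[OF s] by simp
  have row: "F x i + F x j + F x l + F x m = 0" if "x < 4" for x
  proof -
    have "(\<Sum>t<4. F x t) = 0"
      unfolding F_def by (rule sum_plane_ewedge_eq_0[OF that s])
    moreover have "(\<Sum>t<4. F x t) = F x i + F x j + F x l + F x m"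
      by (rule sum_lessThan_4_eq) (use i j l m distinct l_def in auto)
    ultimately show ?thesis by simp
  qed
  have h1: "F i j + F i m = 0"
    using row[OF i] diag[OF i] col[of i] by simp
  have h2: "F i j + F j m = 0"
    using row[OF j] diag[OF j] col[of j] F_sym[OF i j] by simp
  have h3: "F i m + F j m = 0"
    using row[OF m(1)] diag[OF m(1)] col[of m] F_sym[OF i m(1)] F_sym[OF j m(1)] by simp
  have "F i j K = 0" for K
    using fun_cong[OF h1, of K] fun_cong[OF h2, of K] fun_cong[OF h3, of K] by simp
  then have "F i j = 0" by auto
  then show ?thesis unfolding F_def .
qed

definition plane_wedge3 :: "nat \<Rightarrow> nat \<Rightarrow> nat \<Rightarrow> nat \<Rightarrow> eform" where
  "plane_wedge3 k a b c = plane k \<wedge> E a \<wedge> E b \<wedge> E c \<wedge> \<beta>"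

lemma plane_wedge3_swap12: "a < 8 \<Longrightarrow> b < 8 \<Longrightarrow> plane_wedge3 k a b c = - plane_wedge3 k b a c"
  unfolding plane_wedge3_def
  using ewedge_homog1_anticommute[OF homog1_E homog1_E, of a b] by (simp add: ewedge_uminus_right)

lemma plane_wedge3_swap23: "b < 8 \<Longrightarrow> c < 8 \<Longrightarrow> plane_wedge3 k a b c = - plane_wedge3 k a c b"
  unfolding plane_wedge3_def
  using ewedge_homog1_anticommute[OF homog1_E homog1_E, of b c] by (simp add: ewedge_uminus_right)

lemma plane_wedge3_eq_0_if_meets:
  assumes k: "k < 4" and abc: "a < 8" "b < 8" "c < 8"
    and meets: "plane_of a = k \<or> plane_of b = k \<or> plane_of c = k"
  shows "plane_wedge3 k a b c = 0"
proof -
  have b_front: "plane_wedge3 k a b c = E a \<wedge> plane k \<wedge> E b \<wedge> E c \<wedge> \<beta>"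
    unfolding plane_wedge3_def by (rule plane_ewedge_swap[OF k])
  have c_front: "E a \<wedge> plane k \<wedge> E b \<wedge> E c \<wedge> \<beta> = E a \<wedge> E b \<wedge> plane k \<wedge> E c \<wedge> \<beta>"
    by (simp only: plane_ewedge_swap[OF k])
  from meets show ?thesis
  proof (elim disjE)
    assume "plane_of a = k"
    then show ?thesis unfolding plane_wedge3_def using plane_of_ewedge_eq_0[OF abc(1)] by blast
  next
    assume "plane_of b = k"
    then show ?thesis unfolding b_front using plane_of_ewedge_eq_0[OF abc(2)] by simp
  next
    assume "plane_of c = k"
    then show ?thesis unfolding b_front c_front using plane_of_ewedge_eq_0[OF abc(3)] by simp
  qed
qed

lemma plane_wedge3_eq_0_if_pair:
  assumes k: "k < 4" and abc: "a < 8" "b < 8" "c < 8"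
    and planes: "plane_of a = plane_of b" "plane_of a \<noteq> k" "plane_of c \<noteq> k"
  shows "plane_wedge3 k a b c = 0"
proof (cases "a = b")
  case True
  then show ?thesis
    unfolding plane_wedge3_def using ewedge_homog1_self[OF homog1_E[OF abc(1)]]
    by (simp add: ewedge_assoc[symmetric])
next
  case False
  define j where "j = plane_of a"
  have "plane k \<wedge> plane j \<wedge> E c \<wedge> \<beta> = 0"
  proof (cases "plane_of c = j")
    case True
    then show ?thesis using plane_of_ewedge_eq_0[OF abc(3), of \<beta>] by simp
  next
    case False
    then show ?thesis
      using plane_plane_ewedge_eq_0[OF k _ abc(3)] plane_of_less planes j_def by auto
  qed
  with ewedge_same_plane[OF abc(1,2) False planes(1), of "E c \<wedge> \<beta>"] show ?thesis
    unfolding plane_wedge3_def j_def by (auto simp: ewedge_uminus_right)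
qed

lemma plane_wedge3_eq_0_if_distinct:
  assumes k: "k < 4" and abc: "a < 8" "b < 8" "c < 8"
    and distinct: "plane_of a \<noteq> k" "plane_of b \<noteq> k" "plane_of c \<noteq> k"
      "plane_of a \<noteq> plane_of b" "plane_of a \<noteq> plane_of c" "plane_of b \<noteq> plane_of c"
  shows "plane_wedge3 k a b c = 0"
proof -
  have "E a \<wedge> E b \<wedge> E c \<wedge> (\<Sum>t<4. plane t) \<wedge> \<beta> = 0"
    using omega_ewedge_eq_0 by (simp add: plane_def)
  then have "(\<Sum>t<4. plane_wedge3 t a b c) = 0"
    unfolding plane_wedge3_def by (simp add: ewedge_sum_left ewedge_sum_right plane_ewedge_swap abc)
  moreover have "(\<Sum>t<4. plane_wedge3 t a b c) = plane_wedge3 k a b c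
      + plane_wedge3 (plane_of a) a b c + plane_wedge3 (plane_of b) a b c + plane_wedge3 (plane_of c) a b c"
    by (rule sum_lessThan_4_eq) (use k distinct plane_of_less in auto)
  moreover have "plane_wedge3 (plane_of a) a b c = 0" "plane_wedge3 (plane_of b) a b c = 0"
    "plane_wedge3 (plane_of c) a b c = 0"
    using plane_wedge3_eq_0_if_meets[OF plane_of_less abc] by auto
  ultimately show ?thesis by simp
qed

lemma plane_wedge3_eq_0:
  assumes k: "k < 4" and abc: "a < 8" "b < 8" "c < 8"
  shows "plane_wedge3 k a b c = 0"
proof (cases "plane_of a = k \<or> plane_of b = k \<or> plane_of c = k")
  case True
  then show ?thesis by (rule plane_wedge3_eq_0_if_meets[OF k abc])
next
  case False
  then have nk: "plane_of a \<noteq> k" "plane_of b \<noteq> k" "plane_of c \<noteq> k" by auto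
  consider "plane_of a = plane_of b" | "plane_of a = plane_of c" | "plane_of b = plane_of c"
    | "plane_of a \<noteq> plane_of b" "plane_of a \<noteq> plane_of c" "plane_of b \<noteq> plane_of c"
    by blast
  then show ?thesis
  proof cases
    case 1
    then show ?thesis by (rule plane_wedge3_eq_0_if_pair[OF k abc _ nk(1,3)])
  next
    case 2
    then have "plane_wedge3 k a c b = 0" by (rule plane_wedge3_eq_0_if_pair[OF k abc(1,3,2) _ nk(1,2)])
    then show ?thesis using plane_wedge3_swap23[OF abc(2,3), of k a] by simp
  next
    case 3
    then have "plane_wedge3 k b c a = 0" by (rule plane_wedge3_eq_0_if_pair[OF k abc(2,3,1) _ nk(2,1)])
    then show ?thesis
      using plane_wedge3_swap12[OF abc(1,2), of k c] plane_wedge3_swap23[OF abc(1,3), of k b] by simp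
  next
    case 4
    then show ?thesis by (rule plane_wedge3_eq_0_if_distinct[OF k abc nk])
  qed
qed

lemma foldr_ewedge_move_front:
  assumes "set L \<subseteq> {..<8}" "x \<in> set L"
  shows "\<exists>s. foldr (\<wedge>) (map E L) Y = escale s (E x \<wedge> foldr (\<wedge>) (map E (remove1 x L)) Y)"
  using assms
proof (induction L)
  case (Cons y L)
  show ?case
  proof (cases "x = y")
    case True
    then show ?thesis by (intro exI[of _ 1]) (simp add: escale_def)
  next
    case False
    then have "x \<in> set L" "set L \<subseteq> {..<8}" "y < 8" "x < 8" using Cons.prems by auto
    then obtain s where "foldr (\<wedge>) (map E L) Y = escale s (E x \<wedge> foldr (\<wedge>) (map E (remove1 x L)) Y)"
      using Cons.IH by blast
    then have "foldr (\<wedge>) (map E (y # L)) Y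
        = escale (- s) (E x \<wedge> E y \<wedge> foldr (\<wedge>) (map E (remove1 x L)) Y)"
      using ewedge_homog1_anticommute[OF homog1_E homog1_E, OF \<open>y < 8\<close> \<open>x < 8\<close>]
      by (simp add: ewedge_escale_right escale_uminus_right)
    then show ?thesis using False by auto
  qed
qed simp

text \<open>Five indices among eight either repeat or, by pigeonhole, contain two from the same plane.\<close>

lemma foldr_ewedge5_eq_0:
  assumes "length L = 5" "set L \<subseteq> {..<8}"
  shows "foldr (\<wedge>) (map E L) \<beta> = 0"
proof (cases "distinct L")
  case False
  then obtain x where x: "x \<in> set (remove1 x L)" using not_distinct_remove1 by blast
  then have "x \<in> set L" by (meson notin_set_remove1)
  then have "x < 8" using assms by auto
  have "set (remove1 x L) \<subseteq> {..<8}" using assms(2) by (meson set_remove1_subset subset_trans)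
  obtain s s' where
    "foldr (\<wedge>) (map E L) \<beta> = escale s (E x \<wedge> foldr (\<wedge>) (map E (remove1 x L)) \<beta>)"
    "foldr (\<wedge>) (map E (remove1 x L)) \<beta>
      = escale s' (E x \<wedge> foldr (\<wedge>) (map E (remove1 x (remove1 x L))) \<beta>)"
    using foldr_ewedge_move_front[OF assms(2) \<open>x \<in> set L\<close>]
      foldr_ewedge_move_front[OF \<open>set (remove1 x L) \<subseteq> {..<8}\<close> x] by blast
  then show ?thesis
    using ewedge_homog1_self[OF homog1_E[OF \<open>x < 8\<close>]] by (simp add: ewedge_escale_right ewedge_assoc[symmetric])
next
  case True
  have "\<not> inj_on plane_of (set L)"
  proof
    assume "inj_on plane_of (set L)"
    then have "card (set L) \<le> card {..<4::nat}" by (intro card_inj_on_le) (auto simp: plane_of_less)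
    then show False using True assms distinct_card by fastforce
  qed
  then obtain a b where ab: "a \<in> set L" "b \<in> set L" "a \<noteq> b" "plane_of a = plane_of b"
    unfolding inj_on_def by blast
  then have ab8: "a < 8" "b < 8" using assms by auto
  have sL: "set (remove1 a L) \<subseteq> {..<8}" using assms(2) by (meson set_remove1_subset subset_trans)
  have bL: "b \<in> set (remove1 a L)" using ab True by simp
  define L' where "L' = remove1 b (remove1 a L)"
  have "set L' \<subseteq> {..<8}" using sL unfolding L'_def by (meson set_remove1_subset subset_trans)
  moreover have "length L' = 3" unfolding L'_def using ab bL assms by (simp add: length_remove1)
  ultimately obtain c1 c2 c3 where c: "L' = [c1, c2, c3]" "c1 < 8" "c2 < 8" "c3 < 8"
    by (auto simp: length_Suc_conv numeral_3_eq_3)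
  obtain s s' where
    "foldr (\<wedge>) (map E L) \<beta> = escale s (E a \<wedge> foldr (\<wedge>) (map E (remove1 a L)) \<beta>)"
    "foldr (\<wedge>) (map E (remove1 a L)) \<beta> = escale s' (E b \<wedge> foldr (\<wedge>) (map E L') \<beta>)"
    using foldr_ewedge_move_front[OF assms(2) ab(1)] foldr_ewedge_move_front[OF sL bL]
    unfolding L'_def by blast
  moreover have "plane (plane_of a) \<wedge> foldr (\<wedge>) (map E L') \<beta> = 0"
    using plane_wedge3_eq_0[OF plane_of_less c(2-4)] unfolding c plane_wedge3_def by simp
  then have "E a \<wedge> E b \<wedge> foldr (\<wedge>) (map E L') \<beta> = 0"
    using ewedge_same_plane[OF ab8 ab(3,4), of "foldr (\<wedge>) (map E L') \<beta>"] by auto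
  ultimately show ?thesis by (simp add: ewedge_escale_right)
qed

end

section \<open>The exterior derivative at a point\<close>

definition nbelow :: "8 \<Rightarrow> 8 set \<Rightarrow> nat" where
  "nbelow j K = card {i \<in> K. i < j}"

text \<open>\<open>D j I\<close> plays the role of the partial derivative \<open>\<partial>\<^sub>j\<close> of the coefficient of \<open>dx\<^sub>I\<close>.\<close>

definition d_of :: "(8 \<Rightarrow> 8 set \<Rightarrow> real) \<Rightarrow> eform" where
  "d_of D = (\<lambda>L. \<Sum>j\<in>L. (-1) ^ nbelow j L * D j (L - {j}))"

lemma nbelow_split:
  assumes "j \<in> K" "I \<subseteq> K - {j}"
  shows "nbelow j K = card {i \<in> I. i < j} + card {r \<in> K - {j} - I. r < j}"
proof -
  have "{i \<in> K. i < j} = {i \<in> I. i < j} \<union> {r \<in> K - {j} - I. r < j}"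
    using assms by auto
  then show ?thesis
    unfolding nbelow_def by (simp add: card_Un_disjoint disjoint_iff)
qed

lemma d_of_ewedge_apply:
  "(d_of D \<wedge> B) K = (\<Sum>j\<in>K. \<Sum>I\<in>Pow (K - {j}).
     (-1) ^ nbelow j K * (-1) ^ inversions I (K - {j} - I) * D j I * B (K - {j} - I))"
proof -
  have "(d_of D \<wedge> B) K = (\<Sum>I'\<in>Pow K. \<Sum>j\<in>I'.
      (-1) ^ inversions I' (K - I') * ((-1) ^ nbelow j I' * D j (I' - {j})) * B (K - I'))"
    unfolding ewedge_def d_of_def by (simp add: sum_distrib_left sum_distrib_right)
  also have "\<dots> = (\<Sum>(I', j)\<in>Sigma (Pow K) (\<lambda>I'. I').
      (-1) ^ inversions I' (K - I') * ((-1) ^ nbelow j I' * D j (I' - {j})) * B (K - I'))"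
    by (rule sum.Sigma) auto
  also have "\<dots> = (\<Sum>(j, I)\<in>Sigma K (\<lambda>j. Pow (K - {j})).
      (-1) ^ nbelow j K * (-1) ^ inversions I (K - {j} - I) * D j I * B (K - {j} - I))"
  proof (rule sum.reindex_bij_witness[where i="\<lambda>(j, I). (insert j I, j)" and j="\<lambda>(I', j). (j, I' - {j})"],
      goal_cases)
    case (5 p)
    obtain I' j where p: "p = (I', j)" by (cases p)
    define I where "I = I' - {j}"
    have "I' \<subseteq> K" "j \<in> I'" using 5 p by auto
    then have I': "I' = insert j I" "j \<notin> I" and jK: "j \<in> K" "I \<subseteq> K - {j}"
      and rest: "K - I' = K - {j} - I"
      unfolding I_def by auto
    have "nbelow j I' = card {i \<in> I. i < j}"
      unfolding nbelow_def I' by (rule arg_cong[where f=card]) auto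
    moreover have "inversions I' (K - I') = inversions I (K - {j} - I) + card {r \<in> K - {j} - I. r < j}"
      using inversions_insert_left[OF I'(2)] rest I'(1) by simp
    ultimately have "nbelow j K + inversions I (K - {j} - I) = inversions I' (K - I') + nbelow j I'"
      using nbelow_split[OF jK] by simp
    then have "(-1::real) ^ nbelow j K * (-1) ^ inversions I (K - {j} - I)
        = (-1) ^ inversions I' (K - I') * (-1) ^ nbelow j I'"
      by (metis power_add)
    then show ?case
      unfolding p using rest I_def by (simp add: algebra_simps)
  qed auto
  also have "\<dots> = (\<Sum>j\<in>K. \<Sum>I\<in>Pow (K - {j}).
      (-1) ^ nbelow j K * (-1) ^ inversions I (K - {j} - I) * D j I * B (K - {j} - I))"
    by (rule sum.Sigma[symmetric]) auto
  finally show ?thesis .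
qed

lemma ewedge_d_of_apply:
  "(grade_inv A \<wedge> d_of D) K = (\<Sum>j\<in>K. \<Sum>I\<in>Pow (K - {j}).
     (-1) ^ nbelow j K * (-1) ^ inversions I (K - {j} - I) * A I * D j (K - {j} - I))"
proof -
  have "(grade_inv A \<wedge> d_of D) K = (\<Sum>I\<in>Pow K. \<Sum>j\<in>K - I.
      (-1) ^ inversions I (K - I) * ((-1) ^ card I * A I) * ((-1) ^ nbelow j (K - I) * D j (K - I - {j})))"
    unfolding ewedge_def grade_inv_def d_of_def by (simp add: sum_distrib_left sum_distrib_right)
  also have "\<dots> = (\<Sum>(I, j)\<in>Sigma (Pow K) (\<lambda>I. K - I).
      (-1) ^ inversions I (K - I) * ((-1) ^ card I * A I) * ((-1) ^ nbelow j (K - I) * D j (K - I - {j})))"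
    by (rule sum.Sigma) auto
  also have "\<dots> = (\<Sum>(j, I)\<in>Sigma K (\<lambda>j. Pow (K - {j})).
      (-1) ^ nbelow j K * (-1) ^ inversions I (K - {j} - I) * A I * D j (K - {j} - I))"
  proof (rule sum.reindex_bij_witness[where i="\<lambda>(j, I). (I, j)" and j="\<lambda>(I, j). (j, I)"], goal_cases)
    case (5 p)
    obtain I j where p: "p = (I, j)" by (cases p)
    define R where "R = K - {j} - I"
    have h: "I \<subseteq> K" "j \<in> K" "j \<notin> I" using 5 p by auto
    then have jK: "j \<in> K" "I \<subseteq> K - {j}" by auto
    have rest: "K - I = insert j R" "j \<notin> R" "K - I - {j} = R"
      unfolding R_def using h by auto
    have "nbelow j (K - I) = card {r \<in> R. r < j}"
      unfolding nbelow_def rest(1) by (rule arg_cong[where f=card]) auto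
    moreover have "inversions I (K - I) = inversions I R + card {i \<in> I. j < i}"
      unfolding rest(1) by (rule inversions_insert_right[OF rest(2)])
    moreover have "card I = card {i \<in> I. i < j} + card {i \<in> I. j < i}"
      by (rule card_split_at[OF h(3)])
    ultimately have "inversions I (K - I) + card I + nbelow j (K - I)
        = (nbelow j K + inversions I R) + 2 * card {i \<in> I. j < i}"
      using nbelow_split[OF jK] R_def by simp
    then have "(-1::real) ^ inversions I (K - I) * (-1) ^ card I * (-1) ^ nbelow j (K - I)
        = (-1) ^ nbelow j K * (-1) ^ inversions I R"
      by (metis (no_types, lifting) power_add power_mult neg_one_even_power
          even_two_times_div_two dvd_triv_left mult_1_right)
    then show ?case
      unfolding p using rest R_def by (simp add: algebra_simps)
  qed auto
  also have "\<dots> = (\<Sum>j\<in>K. \<Sum>I\<in>Pow (K - {j}).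
      (-1) ^ nbelow j K * (-1) ^ inversions I (K - {j} - I) * A I * D j (K - {j} - I))"
    by (rule sum.Sigma[symmetric]) auto
  finally show ?thesis .
qed

definition coord_diff_at :: "(8 set \<Rightarrow> real^8 \<Rightarrow> 'a::real_normed_vector) \<Rightarrow> real^8 \<Rightarrow> bool" where
  "coord_diff_at a x \<longleftrightarrow> (\<forall>I j. (\<lambda>t. a I (x + t *\<^sub>R axis j 1)) differentiable (at (0::real)))"

abbreviation line_diff :: "(real^8 \<Rightarrow> 'a::real_normed_vector) \<Rightarrow> real^8 \<Rightarrow> 8 \<Rightarrow> bool" where
  "line_diff f x j \<equiv> (\<lambda>t::real. f (x + t *\<^sub>R axis j 1)) differentiable (at 0)"

lemma partial_has_vector_derivative:
  "line_diff f x j \<Longrightarrow> ((\<lambda>t. f (x + t *\<^sub>R axis j 1)) has_vector_derivative partial j f x) (at 0)"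
  unfolding partial_def using vector_derivative_works by blast

lemma partial_add:
  fixes f g :: "real^8 \<Rightarrow> 'a::real_normed_vector"
  assumes "line_diff f x j" "line_diff g x j"
  shows "partial j (\<lambda>y. f y + g y) x = partial j f x + partial j g x"
  unfolding partial_def[of j "\<lambda>y. f y + g y"]
  by (intro vector_derivative_at has_vector_derivative_add partial_has_vector_derivative assms)

lemma partial_diff:
  fixes f g :: "real^8 \<Rightarrow> 'a::real_normed_vector"
  assumes "line_diff f x j" "line_diff g x j"
  shows "partial j (\<lambda>y. f y - g y) x = partial j f x - partial j g x"
  unfolding partial_def[of j "\<lambda>y. f y - g y"]
  by (intro vector_derivative_at has_vector_derivative_diff partial_has_vector_derivative assms)

lemma partial_cmult:
  fixes f :: "real^8 \<Rightarrow> 'a::real_normed_algebra"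
  assumes "line_diff f x j"
  shows "partial j (\<lambda>y. c * f y) x = c * partial j f x"
  unfolding partial_def[of j "\<lambda>y. c * f y"]
  by (intro vector_derivative_at has_vector_derivative_mult_right partial_has_vector_derivative assms)

lemma partial_mult:
  fixes f g :: "real^8 \<Rightarrow> real"
  assumes "line_diff f x j" "line_diff g x j"
  shows "partial j (\<lambda>y. f y * g y) x = partial j f x * g x + f x * partial j g x"
proof -
  have "((\<lambda>t. f (x + t *\<^sub>R axis j 1) * g (x + t *\<^sub>R axis j 1)) has_vector_derivative
      (f (x + 0 *\<^sub>R axis j 1) * partial j g x + partial j f x * g (x + 0 *\<^sub>R axis j 1))) (at 0)"
    by (intro has_vector_derivative_mult partial_has_vector_derivative assms)
  then show ?thesis
    unfolding partial_def[of j "\<lambda>y. f y * g y"] by (simp add: vector_derivative_at)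
qed

lemma partial_sum:
  fixes f :: "'i \<Rightarrow> real^8 \<Rightarrow> 'a::real_normed_vector"
  assumes "\<And>i. i \<in> S \<Longrightarrow> line_diff (f i) x j"
  shows "partial j (\<lambda>y. \<Sum>i\<in>S. f i y) x = (\<Sum>i\<in>S. partial j (f i) x)"
  unfolding partial_def[of j "\<lambda>y. \<Sum>i\<in>S. f i y"]
  by (intro vector_derivative_at has_vector_derivative_sum partial_has_vector_derivative assms)

lemma partial_of_real:
  fixes f :: "real^8 \<Rightarrow> real"
  assumes "line_diff f x j"
  shows "partial j (\<lambda>y. complex_of_real (f y)) x = complex_of_real (partial j f x)"
  unfolding partial_def[of j "\<lambda>y. complex_of_real (f y)"]
  by (intro vector_derivative_at has_vector_derivative_of_real)
    (simp add: has_real_derivative_iff_has_vector_derivative partial_has_vector_derivative[OF assms])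

lemma line_diff_of_real:
  fixes f :: "real^8 \<Rightarrow> real"
  assumes "line_diff f x j"
  shows "line_diff (\<lambda>y. complex_of_real (f y)) x j"
proof -
  have "((\<lambda>t. f (x + t *\<^sub>R axis j 1)) has_real_derivative partial j f x) (at 0)"
    unfolding has_real_derivative_iff_has_vector_derivative
    by (rule partial_has_vector_derivative[OF assms])
  then show ?thesis by (rule differentiableI_vector[OF has_vector_derivative_of_real])
qed

lemma partial_const_zero: "(\<And>y. f y = 0) \<Longrightarrow> partial j f x = 0"
  by (simp add: partial_def)

lemma coord_diff_at_fadd: "coord_diff_at a x \<Longrightarrow> coord_diff_at b x \<Longrightarrow> coord_diff_at (fadd a b) x"
  unfolding coord_diff_at_def fadd_def by auto

lemma coord_diff_at_fsub: "coord_diff_at a x \<Longrightarrow> coord_diff_at b x \<Longrightarrow> coord_diff_at (fsub a b) x"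
  unfolding coord_diff_at_def fsub_def by auto

lemma coord_diff_at_fscale: "coord_diff_at a x \<Longrightarrow> coord_diff_at (fscale c a) x"
  unfolding coord_diff_at_def fscale_def by (auto intro!: differentiable_mult)

lemma coord_diff_at_cform: "coord_diff_at a x \<Longrightarrow> coord_diff_at (cform a) x"
  unfolding coord_diff_at_def cform_def by (auto intro!: line_diff_of_real)

lemma coord_diff_at_wedge:
  "coord_diff_at (a :: real dform) x \<Longrightarrow> coord_diff_at b x \<Longrightarrow> coord_diff_at (wedge a b) x"
  unfolding coord_diff_at_def wedge_def by (auto intro!: differentiable_sum differentiable_mult)

lemma ext_d_fadd:
  "coord_diff_at a x \<Longrightarrow> coord_diff_at b x \<Longrightarrow> ext_d (fadd a b) K x = ext_d a K x + ext_d b K x"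
  unfolding ext_d_def fadd_def by (simp add: partial_add coord_diff_at_def sum.distrib algebra_simps)

lemma ext_d_fsub:
  "coord_diff_at a x \<Longrightarrow> coord_diff_at b x \<Longrightarrow> ext_d (fsub a b) K x = ext_d a K x - ext_d b K x"
  unfolding ext_d_def fsub_def by (simp add: partial_diff coord_diff_at_def sum_subtractf algebra_simps)

lemma ext_d_fscale: "coord_diff_at a x \<Longrightarrow> ext_d (fscale c a) K x = c * ext_d a K x"
  unfolding ext_d_def fscale_def by (simp add: partial_cmult coord_diff_at_def sum_distrib_left algebra_simps)

lemma ext_d_cform: "coord_diff_at a x \<Longrightarrow> ext_d (cform a) K x = complex_of_real (ext_d a K x)"
  unfolding ext_d_def cform_def by (simp add: partial_of_real coord_diff_at_def)

abbreviation form_at :: "real dform \<Rightarrow> real^8 \<Rightarrow> eform" where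
  "form_at a x \<equiv> (\<lambda>I. a I x)"

lemma form_at_wedge: "form_at (wedge a b) x = form_at a x \<wedge> form_at b x"
  by (simp add: wedge_def ewedge_def)

lemma form_at_fadd: "form_at (fadd a b) x = form_at a x + form_at b x"
  by (simp add: fadd_def fun_eq_iff)

lemma form_at_fsub: "form_at (fsub a b) x = form_at a x - form_at b x"
  by (simp add: fsub_def fun_eq_iff)

lemma form_at_ext_d: "form_at (ext_d a) x = d_of (\<lambda>j I. partial j (a I) x)"
  by (simp add: ext_d_def d_of_def nbelow_def)

lemma partial_wedge:
  fixes a b :: "real dform"
  assumes "coord_diff_at a x" "coord_diff_at b x"
  shows "partial j (wedge a b L) x = (\<Sum>I\<in>Pow L. (-1) ^ inversions I (L - I) *
    (partial j (a I) x * b (L - I) x + a I x * partial j (b (L - I)) x))"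
proof -
  have "partial j (wedge a b L) x
      = (\<Sum>I\<in>Pow L. partial j (\<lambda>y. (-1) ^ inversions I (L - I) * a I y * b (L - I) y) x)"
    unfolding wedge_def using assms by (simp add: partial_sum coord_diff_at_def)
  also have "\<dots> = (\<Sum>I\<in>Pow L. (-1) ^ inversions I (L - I) *
      (partial j (a I) x * b (L - I) x + a I x * partial j (b (L - I)) x))"
  proof (intro sum.cong refl)
    fix I
    let ?s = "(-1::real) ^ inversions I (L - I)"
    have a: "line_diff (a I) x j" and b: "line_diff (b (L - I)) x j"
      using assms by (auto simp: coord_diff_at_def)
    then have "line_diff (\<lambda>y. ?s * a I y) x j" by auto
    then have "partial j (\<lambda>y. ?s * a I y * b (L - I) y) x
        = partial j (\<lambda>y. ?s * a I y) x * b (L - I) x + ?s * a I x * partial j (b (L - I)) x"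
      by (rule partial_mult[OF _ b])
    also have "partial j (\<lambda>y. ?s * a I y) x = ?s * partial j (a I) x"
      by (rule partial_cmult[OF a])
    finally have product_rule: "partial j (\<lambda>y. ?s * a I y * b (L - I) y) x
        = ?s * partial j (a I) x * b (L - I) x + ?s * a I x * partial j (b (L - I)) x" .
    show "partial j (\<lambda>y. ?s * a I y * b (L - I) y) x
        = ?s * (partial j (a I) x * b (L - I) x + a I x * partial j (b (L - I)) x)"
      unfolding product_rule by (simp add: algebra_simps)
  qed
  finally show ?thesis .
qed

lemma ext_d_wedge:
  fixes a b :: "real dform"
  assumes "coord_diff_at a x" "coord_diff_at b x"
  shows "form_at (ext_d (wedge a b)) x
    = form_at (ext_d a) x \<wedge> form_at b x + grade_inv (form_at a x) \<wedge> form_at (ext_d b) x"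
proof (rule ext)
  fix K :: "8 set"
  have "ext_d (wedge a b) K x = (\<Sum>j\<in>K. (-1) ^ nbelow j K * (\<Sum>I\<in>Pow (K - {j}).
      (-1) ^ inversions I (K - {j} - I) *
      (partial j (a I) x * b (K - {j} - I) x + a I x * partial j (b (K - {j} - I)) x)))"
    unfolding ext_d_def nbelow_def partial_wedge[OF assms] ..
  also have "\<dots> = (form_at (ext_d a) x \<wedge> form_at b x + grade_inv (form_at a x) \<wedge> form_at (ext_d b) x) K"
    unfolding form_at_ext_d plus_fun_apply d_of_ewedge_apply ewedge_d_of_apply
    by (simp add: sum_distrib_left algebra_simps sum.distrib)
  finally show "ext_d (wedge a b) K x = (form_at (ext_d a) x \<wedge> form_at b x
      + grade_inv (form_at a x) \<wedge> form_at (ext_d b) x) K" .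
qed

section \<open>The \<open>SL(4,\<real>)\<close>-structure at a point\<close>

definition dhomog :: "nat \<Rightarrow> real dform \<Rightarrow> bool" where
  "dhomog n a \<longleftrightarrow> (\<forall>I. card I \<noteq> n \<longrightarrow> (\<forall>y. a I y = 0))"

lemma dhomog_fadd: "dhomog n a \<Longrightarrow> dhomog n b \<Longrightarrow> dhomog n (fadd a b)"
  by (simp add: dhomog_def fadd_def)

lemma dhomog_fsub: "dhomog n a \<Longrightarrow> dhomog n b \<Longrightarrow> dhomog n (fsub a b)"
  by (simp add: dhomog_def fsub_def)

lemma dhomog_wedge:
  assumes "dhomog n a" "dhomog m b"
  shows "dhomog (n + m) (wedge a b)"
  unfolding dhomog_def wedge_def
proof (intro allI impI sum.neutral ballI)
  fix K :: "8 set" and I y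
  assume "card K \<noteq> n + m" "I \<in> Pow K"
  then have "card I \<noteq> n \<or> card (K - I) \<noteq> m" using card_subset_split[of I K] by auto
  then show "(-1) ^ inversions I (K - I) * a I y * b (K - I) y = 0"
    using assms by (auto simp: dhomog_def)
qed

lemma homog_form_at: "dhomog n a \<Longrightarrow> homog n (form_at a x)"
  by (simp add: dhomog_def homog_def)

lemma homog_ext_d:
  assumes "dhomog n a"
  shows "homog (Suc n) (form_at (ext_d a) x)"
  unfolding homog_def ext_d_def
proof (intro allI impI sum.neutral ballI)
  fix K :: "8 set" and j
  assume "card K \<noteq> Suc n" "j \<in> K"
  moreover have "card K = Suc (card (K - {j}))"
    using \<open>j \<in> K\<close> by (rule card_Suc_Diff1[symmetric, OF finite])
  ultimately have "card (K - {j}) \<noteq> n" by metis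
  then have "partial j (a (K - {j})) x = 0"
    using assms by (intro partial_const_zero) (simp add: dhomog_def)
  then show "(-1) ^ card {i \<in> K. i < j} * partial j (a (K - {j})) x = 0" by simp
qed

lemma form_at_ext_d_wedge4:
  fixes A :: "nat \<Rightarrow> real dform"
  assumes diff: "\<And>i. i < 4 \<Longrightarrow> coord_diff_at (A i) x"
  defines "a i \<equiv> form_at (A i) x" and "d i \<equiv> form_at (ext_d (A i)) x"
  shows "form_at (ext_d (wedge (wedge (wedge (A 0) (A 1)) (A 2)) (A 3))) x
    = ((d 0 \<wedge> a 1) \<wedge> a 2) \<wedge> a 3 + ((grade_inv (a 0) \<wedge> d 1) \<wedge> a 2) \<wedge> a 3
      + (grade_inv (a 0 \<wedge> a 1) \<wedge> d 2) \<wedge> a 3 + grade_inv ((a 0 \<wedge> a 1) \<wedge> a 2) \<wedge> d 3"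
proof -
  have A: "coord_diff_at (A 0) x" "coord_diff_at (A 1) x" "coord_diff_at (A 2) x" "coord_diff_at (A 3) x"
    using diff by auto
  have "form_at (ext_d (wedge (A 0) (A 1))) x = d 0 \<wedge> a 1 + grade_inv (a 0) \<wedge> d 1"
    unfolding a_def d_def by (rule ext_d_wedge[OF A(1,2)])
  moreover have "form_at (ext_d (wedge (wedge (A 0) (A 1)) (A 2))) x
      = form_at (ext_d (wedge (A 0) (A 1))) x \<wedge> a 2 + grade_inv (a 0 \<wedge> a 1) \<wedge> d 2"
    using ext_d_wedge[OF coord_diff_at_wedge[OF A(1,2)] A(3)] by (simp add: a_def d_def form_at_wedge)
  moreover have "form_at (ext_d (wedge (wedge (wedge (A 0) (A 1)) (A 2)) (A 3))) x
      = form_at (ext_d (wedge (wedge (A 0) (A 1)) (A 2))) x \<wedge> a 3 + grade_inv ((a 0 \<wedge> a 1) \<wedge> a 2) \<wedge> d 3"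
    using ext_d_wedge[OF coord_diff_at_wedge[OF coord_diff_at_wedge[OF A(1,2)] A(3)] A(4)]
    by (simp add: a_def d_def form_at_wedge)
  ultimately show ?thesis
    by (simp only: ewedge_add_left add.assoc)
qed

lemma split_along_ext_d_wedge4:
  fixes A :: "nat \<Rightarrow> real dform"
  assumes diff: "\<And>i. i < 4 \<Longrightarrow> coord_diff_at (A i) x"
    and homog: "\<And>i. i < 4 \<Longrightarrow> homog 1 (form_at (A i) x)"
  shows "split_along (\<lambda>i. form_at (A i) x)
    (form_at (ext_d (wedge (wedge (wedge (A 0) (A 1)) (A 2)) (A 3))) x)"
proof -
  define a where "a i = form_at (A i) x" for i
  define d where "d i = form_at (ext_d (A i)) x" for i
  have a: "homog 1 (a 0)" "homog 1 (a 1)" "homog 1 (a 2)" "homog 1 (a 3)"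
    using homog unfolding a_def by auto
  define T :: "nat \<Rightarrow> eform" where
    "T k = (if k = 0 then ((d 0 \<wedge> a 1) \<wedge> a 2) \<wedge> a 3
      else if k = 1 then ((grade_inv (a 0) \<wedge> d 1) \<wedge> a 2) \<wedge> a 3
      else if k = 2 then (grade_inv (a 0 \<wedge> a 1) \<wedge> d 2) \<wedge> a 3
      else grade_inv ((a 0 \<wedge> a 1) \<wedge> a 2) \<wedge> d 3)" for k
  have "form_at (ext_d (wedge (wedge (wedge (A 0) (A 1)) (A 2)) (A 3))) x
      = ((d 0 \<wedge> a 1) \<wedge> a 2) \<wedge> a 3 + ((grade_inv (a 0) \<wedge> d 1) \<wedge> a 2) \<wedge> a 3
        + (grade_inv (a 0 \<wedge> a 1) \<wedge> d 2) \<wedge> a 3 + grade_inv ((a 0 \<wedge> a 1) \<wedge> a 2) \<wedge> d 3"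
    unfolding a_def d_def by (rule form_at_ext_d_wedge4[OF diff])
  also have "\<dots> = (\<Sum>k<4. T k)"
    unfolding sum_lessThan_4 T_def by simp
  finally have "form_at (ext_d (wedge (wedge (wedge (A 0) (A 1)) (A 2)) (A 3))) x = (\<Sum>k<4. T k)" .
  moreover have "annihilates (a i) (T k)" if "k < 4" "i < 4" "i \<noteq> k" for k i
  proof -
    have "k = 0 \<or> k = 1 \<or> k = 2 \<or> k = 3" "i = 0 \<or> i = 1 \<or> i = 2 \<or> i = 3"
      using that(1,2) by linarith+
    \<comment> \<open>\<open>One_nat_def\<close> would rewrite \<open>a 1\<close> to \<open>a (Suc 0)\<close>, out of reach of the facts \<open>a\<close>.\<close>
    then show ?thesis
      using that(3) unfolding T_def
      by (auto simp del: One_nat_def; blast intro: annihilates_ewedge_left annihilates_ewedge_right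
          annihilates_grade_inv annihilates_self a)
  qed
  ultimately show ?thesis
    unfolding split_along_def a_def by blast
qed

text \<open>The \<open>k\<close>-th factor of \<open>\<Omega>\<^sub>\<plusminus> = (e\<^sup>4 \<plusminus> e\<^sup>0) \<wedge> (e\<^sup>1 \<plusminus> e\<^sup>5) \<wedge> (e\<^sup>2 \<plusminus> e\<^sup>6) \<wedge> (e\<^sup>3 \<plusminus> e\<^sup>7)\<close> is
  \<open>e\<^bsub>Omega_fst k\<^esub> \<plusminus> e\<^bsub>Omega_snd k\<^esub>\<close>.\<close>

definition Omega_fst :: "nat \<Rightarrow> nat" where "Omega_fst k = (if k = 0 then 4 else k)"
definition Omega_snd :: "nat \<Rightarrow> nat" where "Omega_snd k = (if k = 0 then 0 else k + 4)"

lemma Omega_index_cases: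
  assumes "j < 8"
  obtains k where "k < 4" "j = Omega_fst k \<or> j = Omega_snd k"
proof -
  consider "j = 0 \<or> j = 4" | "0 < j" "j < 4" | "4 < j" "j < 8"
    using assms by linarith
  then show ?thesis
  proof cases
    case 1
    then show ?thesis using that[of 0] by (auto simp: Omega_fst_def Omega_snd_def)
  next
    case 2
    then show ?thesis using that[of j] by (simp add: Omega_fst_def)
  next
    case 3
    then show ?thesis using that[of "j - 4"] by (simp add: Omega_snd_def)
  qed
qed

locale coframe_at =
  fixes e :: "nat \<Rightarrow> real dform" and x :: "real^8"
  assumes degree_one: "\<And>i. i < 8 \<Longrightarrow> dhomog 1 (e i)"
    and diff: "\<And>i. i < 8 \<Longrightarrow> coord_diff_at (e i) x"
    and indep: "\<forall>c::nat \<Rightarrow> real. (\<forall>j. (\<Sum>i<8. c i * e i {j} x) = 0) \<longrightarrow> (\<forall>i<8. c i = 0)"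
begin

definition E :: "nat \<Rightarrow> eform" where "E n = form_at (e n) x"

definition A_plus :: "nat \<Rightarrow> real dform" where "A_plus k = fadd (e (Omega_fst k)) (e (Omega_snd k))"
definition A_minus :: "nat \<Rightarrow> real dform" where "A_minus k = fsub (e (Omega_fst k)) (e (Omega_snd k))"

definition G :: "nat \<Rightarrow> eform" where
  "G i = (if i < 4 then form_at (A_plus i) x else form_at (A_minus (i - 4)) x)"

lemma Omega_fst_less: "k < 4 \<Longrightarrow> Omega_fst k < 8"
  and Omega_snd_less: "k < 4 \<Longrightarrow> Omega_snd k < 8"
  by (simp_all add: Omega_fst_def Omega_snd_def)

lemma homog1_E: "n < 8 \<Longrightarrow> homog 1 (E n)"
  unfolding E_def by (rule homog_form_at[OF degree_one])

lemma dhomog_A: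
  assumes "k < 4"
  shows "dhomog 1 (A_plus k)" "dhomog 1 (A_minus k)"
  unfolding A_plus_def A_minus_def
  by (intro dhomog_fadd dhomog_fsub degree_one Omega_fst_less Omega_snd_less assms)+

lemma diff_A:
  assumes "k < 4"
  shows "coord_diff_at (A_plus k) x" "coord_diff_at (A_minus k) x"
  unfolding A_plus_def A_minus_def
  by (intro coord_diff_at_fadd coord_diff_at_fsub diff Omega_fst_less Omega_snd_less assms)+

lemma homog1_G:
  assumes "i < 8"
  shows "homog 1 (G i)"
proof (cases "i < 4")
  case True
  then show ?thesis unfolding G_def if_P[OF True] by (intro homog_form_at dhomog_A)
next
  case False
  then show ?thesis unfolding G_def if_not_P[OF False]
    by (intro homog_form_at dhomog_A) (use assms in linarith)
qed

lemma Omega_plus_eq: "Omega_plus e = wedge (wedge (wedge (A_plus 0) (A_plus 1)) (A_plus 2)) (A_plus 3)"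
  by (simp add: Omega_plus_def A_plus_def Omega_fst_def Omega_snd_def)

lemma Omega_minus_eq: "Omega_minus e = wedge (wedge (wedge (A_minus 0) (A_minus 1)) (A_minus 2)) (A_minus 3)"
  by (simp add: Omega_minus_def A_minus_def Omega_fst_def Omega_snd_def)

lemma dhomog_Omega: "dhomog 4 (Omega_plus e)" "dhomog 4 (Omega_minus e)"
proof -
  have "dhomog (1 + 1 + 1 + 1) (Omega_plus e)"
    unfolding Omega_plus_eq by (intro dhomog_wedge dhomog_A) simp_all
  moreover have "dhomog (1 + 1 + 1 + 1) (Omega_minus e)"
    unfolding Omega_minus_eq by (intro dhomog_wedge dhomog_A) simp_all
  ultimately show "dhomog 4 (Omega_plus e)" "dhomog 4 (Omega_minus e)"
    by (simp_all add: numeral_eq_Suc)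
qed

lemma diff_Omega: "coord_diff_at (Omega_plus e) x" "coord_diff_at (Omega_minus e) x"
  unfolding Omega_plus_eq Omega_minus_eq by (simp_all add: coord_diff_at_wedge diff_A)

lemma dx_in_span_E: "\<exists>b. dx j = (\<Sum>i<8. escale (b i) (E i))"
  by (rule dx_in_span[OF homog1_E]) (use indep in \<open>simp_all add: E_def\<close>)

lemma E_in_span_G:
  assumes "j < 8"
  shows "\<exists>b. E j = (\<Sum>i<8. escale (b i) (G i))"
proof -
  have sum_pair: "(\<Sum>i<8. escale ((if i = k then c1 else 0) + (if i = k + 4 then c2 else 0)) (G i))
      = escale c1 (G k) + escale c2 (G (k + 4))" if "k < 4" for k c1 c2
  proof -
    have "(\<Sum>i<8. escale ((if i = k then c1 else 0) + (if i = k + 4 then c2 else 0)) (G i))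
        = (\<Sum>i<8. if i = k then escale c1 (G i) else 0) + (\<Sum>i<8. if i = k + 4 then escale c2 (G i) else 0)"
      unfolding escale_add_left sum.distrib
      by (intro arg_cong2[where f="(+)"] sum.cong) (auto simp: escale_def zero_fun_def)
    also have "\<dots> = escale c1 (G k) + escale c2 (G (k + 4))"
      using that by (simp add: sum.delta)
    finally show ?thesis .
  qed
  obtain k where k: "k < 4" "j = Omega_fst k \<or> j = Omega_snd k"
    using Omega_index_cases[OF assms] .
  have G_plus: "G k = E (Omega_fst k) + E (Omega_snd k)"
    and G_minus: "G (k + 4) = E (Omega_fst k) - E (Omega_snd k)"
    using k(1) by (simp_all add: G_def E_def A_plus_def A_minus_def form_at_fadd form_at_fsub)
  have E_fst: "E (Omega_fst k) = escale (1/2) (G k) + escale (1/2) (G (k + 4))"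
    and E_snd: "E (Omega_snd k) = escale (1/2) (G k) + escale (-1/2) (G (k + 4))"
    unfolding G_plus G_minus by (auto simp: escale_def fun_eq_iff field_simps)
  from k(2) show ?thesis
  proof
    assume "j = Omega_fst k"
    then show ?thesis
      by (intro exI[of _ "\<lambda>i. (if i = k then 1/2 else 0) + (if i = k + 4 then 1/2 else 0)"])
        (simp only: sum_pair[OF k(1)] E_fst)
  next
    assume "j = Omega_snd k"
    then show ?thesis
      by (intro exI[of _ "\<lambda>i. (if i = k then 1/2 else 0) + (if i = k + 4 then -1/2 else 0)"])
        (simp only: sum_pair[OF k(1)] E_snd)
  qed
qed

lemma ext_d_Omega_eq_0_if_equal:
  assumes eq: "form_at (ext_d (Omega_plus e)) x = form_at (ext_d (Omega_minus e)) x"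
  shows "form_at (ext_d (Omega_plus e)) x = 0"
proof (rule homog_eq_0_if_foldr_ewedge_eq_0[OF homog1_E dx_in_span_E])
  let ?\<gamma> = "form_at (ext_d (Omega_plus e)) x"
  show "homog 5 ?\<gamma>"
    using homog_ext_d[OF dhomog_Omega(1)] by (simp add: eval_nat_numeral)
  have "split_along (\<lambda>i. form_at (A_plus i) x) ?\<gamma>"
    unfolding Omega_plus_eq by (intro split_along_ext_d_wedge4 diff_A homog_form_at dhomog_A)
  then have lo: "split_along G ?\<gamma>"
    by (rule split_along_cong[THEN iffD1, rotated]) (simp add: G_def)
  have "split_along (\<lambda>i. form_at (A_minus i) x) ?\<gamma>"
    unfolding eq Omega_minus_eq by (intro split_along_ext_d_wedge4 diff_A homog_form_at dhomog_A)
  then have hi: "split_along (\<lambda>i. G (i + 4)) ?\<gamma>"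
    by (rule split_along_cong[THEN iffD1, rotated]) (simp add: G_def)
  have "G a \<wedge> G b \<wedge> G c \<wedge> ?\<gamma> = 0" if "a < 8" "b < 8" "c < 8" for a b c
    by (rule ewedge3_eq_0_if_split_along_halves[OF homog1_G lo hi that])
  then have "foldr (\<wedge>) (map G is) ?\<gamma> = 0" if "length is = 3" "set is \<subseteq> {..<8}" for "is"
    using that by (auto simp: length_Suc_conv numeral_3_eq_3)
  then show "foldr (\<wedge>) (map E is) ?\<gamma> = 0" if "length is = 8 - 5" "set is \<subseteq> {..<8}" for "is"
    using that by (intro foldr_ewedge_eq_0_if_spanned[of "{..<8}" E 8 G, OF homog1_E homog1_G E_in_span_G])
      auto
qed

lemma omega_r_at: "form_at (omega_r e) x = (\<Sum>k<4. E (plane_fst k) \<wedge> E (plane_snd k))"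
proof -
  have "form_at (omega_r e) x = (E 1 \<wedge> E 5 + E 2 \<wedge> E 6) + (E 3 \<wedge> E 7 + E 4 \<wedge> E 0)"
    unfolding omega_r_def form_at_fadd form_at_wedge E_def ..
  also have "\<dots> = (\<Sum>k<4. E (plane_fst k) \<wedge> E (plane_snd k))"
  proof -
    have "plane_fst 0 = 1" "plane_fst 1 = 2" "plane_fst 2 = 3" "plane_fst 3 = 4"
      "plane_snd 0 = 5" "plane_snd 1 = 6" "plane_snd 2 = 7" "plane_snd 3 = 0"
      by (simp_all add: plane_fst_def plane_snd_def)
    then show ?thesis
      unfolding sum_lessThan_4 by (simp only: add.assoc)
  qed
  finally show ?thesis .
qed

lemma dhomog_omega_r: "dhomog 2 (omega_r e)"
  using dhomog_wedge[OF degree_one degree_one]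
  by (simp add: omega_r_def dhomog_fadd eval_nat_numeral)

lemma diff_omega_r: "coord_diff_at (omega_r e) x"
  by (simp add: omega_r_def coord_diff_at_fadd coord_diff_at_wedge diff)

lemma ext_d_omega_r_eq_0_if_square:
  assumes "form_at (ext_d (wedge (omega_r e) (omega_r e))) x = 0"
  shows "form_at (ext_d (omega_r e)) x = 0"
proof -
  let ?\<omega> = "\<Sum>k<4. E (plane_fst k) \<wedge> E (plane_snd k)"
  let ?\<beta> = "form_at (ext_d (omega_r e)) x"
  have homog2: "homog 1 (E (plane_fst k))" "homog 1 (E (plane_snd k))" if "k < 4" for k
    by (intro homog1_E plane_fst_less plane_snd_less that)+
  have "grade_inv ?\<omega> = ?\<omega>"
    unfolding grade_inv_sum by (intro sum.cong refl grade_inv_homog2 homog2) auto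
  moreover have "X \<wedge> ?\<omega> = ?\<omega> \<wedge> X" for X
    unfolding ewedge_sum_left[OF finite_lessThan] ewedge_sum_right[OF finite_lessThan]
    by (intro sum.cong refl ewedge_homog2_commute[symmetric] homog2) auto
  ultimately have "?\<omega> \<wedge> ?\<beta> + ?\<omega> \<wedge> ?\<beta> = 0"
    using assms ext_d_wedge[OF diff_omega_r diff_omega_r] by (simp add: omega_r_at)
  then have "?\<omega> \<wedge> ?\<beta> = 0"
    by (simp add: fun_eq_iff)
  then interpret lefschetz_kernel E ?\<beta>
    by unfold_locales (rule homog1_E)
  show ?thesis
  proof (rule homog_eq_0_if_foldr_ewedge_eq_0[OF homog1_E dx_in_span_E])
    show "homog 3 ?\<beta>"
      using homog_ext_d[OF dhomog_omega_r] by (simp add: eval_nat_numeral)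
    show "foldr (\<wedge>) (map E is) ?\<beta> = 0" if "length is = 8 - 3" "set is \<subseteq> {..<8}" for "is"
      using foldr_ewedge5_eq_0 that by simp
  qed
qed

lemma ext_d_Phi_eq_0_iff:
  assumes "sin (2 * \<theta>) \<noteq> 0"
  shows "(\<forall>K. ext_d (Phi e \<theta>) K x = 0) \<longleftrightarrow>
    (\<forall>K. ext_d (omega_r e) K x = 0) \<and> (\<forall>K. ext_d (Omega_plus e) K x = 0)
      \<and> (\<forall>K. ext_d (Omega_minus e) K x = 0)"
proof -
  define P where "P K = ext_d (Omega_plus e) K x" for K
  define M where "M K = ext_d (Omega_minus e) K x" for K
  define C where "C K = ext_d (wedge (omega_r e) (omega_r e)) K x" for K
  have diff_square: "coord_diff_at (wedge (omega_r e) (omega_r e)) x"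
    by (intro coord_diff_at_wedge diff_omega_r)
  have Phi_expand: "ext_d (Phi e \<theta>) K x = complex_of_real (cos (2 * \<theta>) / 2) * complex_of_real (P K + M K)
      + (\<i> * complex_of_real (sin (2 * \<theta>) / 2)) * complex_of_real (P K - M K)
      + 1/2 * complex_of_real (C K)" for K
    unfolding Phi_def P_def M_def C_def
    by (simp add: ext_d_fadd ext_d_fscale ext_d_cform ext_d_fsub coord_diff_at_fadd coord_diff_at_fsub
        coord_diff_at_fscale coord_diff_at_cform diff_Omega diff_square)
  have Phi_parts: "ext_d (Phi e \<theta>) K x = 0 \<longleftrightarrow>
      cos (2 * \<theta>) / 2 * (P K + M K) + C K / 2 = 0 \<and> sin (2 * \<theta>) / 2 * (P K - M K) = 0" for K
    unfolding Phi_expand by (simp add: complex_eq_iff)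
  show ?thesis
  proof
    assume closed_Phi: "\<forall>K. ext_d (Phi e \<theta>) K x = 0"
    have PM: "P K = M K" for K
      using Phi_parts[of K] closed_Phi assms by auto
    then have "form_at (ext_d (Omega_plus e)) x = form_at (ext_d (Omega_minus e)) x"
      unfolding P_def M_def by (intro ext)
    then have "form_at (ext_d (Omega_plus e)) x = 0"
      by (rule ext_d_Omega_eq_0_if_equal)
    then have P0: "P K = 0" for K
      unfolding P_def by (metis zero_fun_apply)
    have "C K = 0" for K
      using Phi_parts[of K] closed_Phi PM P0 by simp
    then have "form_at (ext_d (wedge (omega_r e) (omega_r e))) x = 0"
      unfolding C_def by (intro ext) simp
    then have "form_at (ext_d (omega_r e)) x = 0"
      by (rule ext_d_omega_r_eq_0_if_square)
    then show "(\<forall>K. ext_d (omega_r e) K x = 0) \<and> (\<forall>K. ext_d (Omega_plus e) K x = 0)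
        \<and> (\<forall>K. ext_d (Omega_minus e) K x = 0)"
      using P0 PM unfolding P_def M_def by (metis zero_fun_apply)
  next
    assume closed: "(\<forall>K. ext_d (omega_r e) K x = 0) \<and> (\<forall>K. ext_d (Omega_plus e) K x = 0)
        \<and> (\<forall>K. ext_d (Omega_minus e) K x = 0)"
    then have "form_at (ext_d (omega_r e)) x = 0"
      by (intro ext) simp
    then have "C K = 0" for K
      using ext_d_wedge[OF diff_omega_r diff_omega_r] unfolding C_def by (metis ewedge_zero_left
          ewedge_zero_right add.right_neutral zero_fun_apply grade_inv_homog1)
    with closed show "\<forall>K. ext_d (Phi e \<theta>) K x = 0"
      using Phi_parts unfolding P_def M_def by simp
  qed
qed

end

theorem mainTheorem3:
  fixes U :: "(real^8) set" and e :: "nat \<Rightarrow> real dform" and \<theta> :: real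
  assumes "open U" and "coframe_on U e" and "0 < \<theta>" and "\<theta> < pi / 2"
  shows "sl4_integrable U e \<longleftrightarrow> dclosed_on U (Phi e \<theta>)"
proof -
  have coframe: "coframe_at e x" if "x \<in> U" for x
  proof
    show "dhomog 1 (e i)" if "i < 8" for i
      using assms(2) that unfolding coframe_on_def dhomog_def by auto
    show "coord_diff_at (e i) x" if "i < 8" for i
    proof -
      have "(\<lambda>t. foldr partial [] (e i I) (x + t *\<^sub>R axis j 1)) differentiable (at 0)" for I j
        using assms(2) \<open>x \<in> U\<close> \<open>i < 8\<close> unfolding coframe_on_def smooth8_on_def by blast
      then show ?thesis unfolding coord_diff_at_def by simp
    qed
    show "\<forall>c::nat \<Rightarrow> real. (\<forall>j. (\<Sum>i<8. c i * e i {j} x) = 0) \<longrightarrow> (\<forall>i<8. c i = 0)"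
      using assms(2) \<open>x \<in> U\<close> unfolding coframe_on_def by blast
  qed
  have "sin (2 * \<theta>) \<noteq> 0"
    using assms(3,4) sin_gt_zero[of "2 * \<theta>"] by auto
  then have "(\<forall>K. ext_d (Phi e \<theta>) K x = 0) \<longleftrightarrow> (\<forall>K. ext_d (omega_r e) K x = 0)
      \<and> (\<forall>K. ext_d (Omega_plus e) K x = 0) \<and> (\<forall>K. ext_d (Omega_minus e) K x = 0)"
    if "x \<in> U" for x
    using coframe_at.ext_d_Phi_eq_0_iff[OF coframe[OF that]] by blast
  then show ?thesis
    unfolding sl4_integrable_def dclosed_on_def by blast
qed

end
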